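(* Let $m,d,L\ge2$ be integers and let $\mathcal{E}=\{\eta_1,\rho_1;\eta_2,\rho_2\}$ be the $m$-qudit ensemble with $\eta_1=\frac{2d^m}{d+3d^m}$, $\rho_1=\frac{1}{2d^m}(\mathbb{1}^m_d+d^m\Phi^m_d)$, $\eta_2=\frac{d+d^m}{d+3d^m}$, $\rho_2=\Phi^m_d$. Let $\mathcal{E}^1=\cdots=\mathcal{E}^L=\mathcal{E}$. Then $$\prod_{l=1}^Lp_{\sf L}(\mathcal{E}^l)=\eta_1^L<p_{\sf L}\Big(\bigotimes_{l=1}^L\mathcal{E}^l\Big),$$ so the optimal LOCC discrimination of $\bigotimes_{l=1}^L\mathcal{E}^l$ is not factorizable. In particular, $(\mathbb{1}^m_d-d\Phi^m_d)\otimes(\mathbb{1}^m_d+d^m\Phi^m_d)$ is not block positive with respect to the $m$ parties.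
   Context: $\mathbb{1}^m_d$ is the identity on $(\mathbb{C}^d)^{\otimes m}$ (parties $\mathsf{A}_1,\dots,\mathsf{A}_m$, each holding one $\mathbb{C}^d$) and $\Phi^m_d=\frac1d\sum_{i,j=0}^{d-1}|i\cdots i\rangle\langle j\cdots j|$ is the $m$-qudit GHZ state. For ensembles $\mathcal{E}^l=\{\eta^l_i,\rho^l_i\}_i$, the sequence ensemble $\bigotimes_l\mathcal{E}^l=\{\eta_{\vec c},\rho_{\vec c}\}_{\vec c}$ has $\eta_{\vec c}=\prod_l\eta^l_{c_l}$, $\rho_{\vec c}=\bigotimes_l\rho^l_{c_l}$, and is regarded as an $m$-party ensemble where party $\mathsf{A}_k$ holds the $k$-th qudit of every copy. An operator $E$ is block positive if $\operatorname{Tr}(E\sigma)\ge0$ for all states $\sigma$ separable across $\mathsf{A}_1,\dots,\mathsf{A}_m$. A measurement is LOCC if realizable by local operations and classical communication among the $m$ parties; for an ensemble $\{\eta_j,\rho_j\}_j$, $p_{\sf L}$ is the maximum of $\sum_j\eta_j\operatorname{Tr}(\rho_jM_j)$ over LOCC measurements $\{M_j\}_j$. Factorizable means $p_{\sf L}(\bigotimes_l\mathcal{E}^l)=\prod_lp_{\sf L}(\mathcal{E}^l)$. *)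

theory Defs
  imports Complex_Main
begin

text \<open>A system of parties 0..<length ns, party k holding C^(ns!k).  A basis index is a
list i with length i = length ns and i!k < ns!k.  Operators are matrices indexed by such
lists; they are required/constructed to vanish outside valid indices.\<close>

type_synonym op = "nat list \<Rightarrow> nat list \<Rightarrow> complex"

definition valid :: "nat list \<Rightarrow> nat list \<Rightarrow> bool" where
  "valid ns i \<longleftrightarrow> length i = length ns \<and> (\<forall>k<length ns. i ! k < ns ! k)"

definition idx :: "nat list \<Rightarrow> nat list set" where
  "idx ns = {i. valid ns i}"

definition idop :: "nat list \<Rightarrow> op" where
  "idop ns i j = (if valid ns i \<and> i = j then 1 else 0)"

definition zeroop :: op where
  "zeroop i j = 0"

definition tr :: "nat list \<Rightarrow> op \<Rightarrow> op \<Rightarrow> complex" where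
  "tr ns A B = (\<Sum>i\<in>idx ns. \<Sum>j\<in>idx ns. A i j * B j i)"

text \<open>Conjugation K^dagger M K of an operator M on the system with dims ns[k:=n'] by a
local Kraus operator K : C^(ns!k) \<rightarrow> C^n' of party k (tensored with identities).\<close>

definition conj_local ::
  "nat list \<Rightarrow> nat \<Rightarrow> nat \<Rightarrow> (nat \<Rightarrow> nat \<Rightarrow> complex) \<Rightarrow> op \<Rightarrow> op" where
  "conj_local ns k n' K M i j =
     (if valid ns i \<and> valid ns j then
        (\<Sum>a<n'. \<Sum>b<n'. cnj (K a (i ! k)) * M (i[k := a]) (j[k := b]) * K b (j ! k))
      else 0)"

text \<open>LOCC measurements (finite-round protocols).  locc_povm ns M: the POVM
M :: outcome \<Rightarrow> operator is realisable by LOCC on the system with local dims ns.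
A protocol either stops and announces a fixed outcome, or some party k performs a local
instrument with Kraus operators K r : C^(ns!k) \<rightarrow> C^n' (r < R; local ancillas/dimension
change allowed), broadcasts r, and the protocol continues depending on r.\<close>

inductive locc_povm :: "nat list \<Rightarrow> (nat \<Rightarrow> op) \<Rightarrow> bool" where
  stop: "locc_povm ns (\<lambda>j. if j = j0 then idop ns else zeroop)"
| step: "\<lbrakk> k < length ns; (R::nat) > 0; (n'::nat) > 0;
           \<forall>x<ns ! k. \<forall>y<ns ! k.
              (\<Sum>r<R. \<Sum>a<n'. cnj (K r a x) * K r a y) = (if x = y then 1 else 0);
           \<forall>r<R. locc_povm (ns[k := n']) (Mr r) \<rbrakk>
         \<Longrightarrow> locc_povm ns (\<lambda>j i i'. \<Sum>r<R. conj_local ns k n' (K r) (Mr r j) i i')"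

definition pL :: "nat list \<Rightarrow> nat \<Rightarrow> (nat \<Rightarrow> real) \<Rightarrow> (nat \<Rightarrow> op) \<Rightarrow> real" where
  "pL ns N eta rho =
     Sup {Re (\<Sum>j<N. of_real (eta j) * tr ns (rho j) (M j)) | M. locc_povm ns M}"

text \<open>Given L ensembles (eta l, rho l) with N outcomes each, on m parties with local
dimension d, the sequence ensemble has outcomes c < N^L (the l-th label being the base-N
digit c div N^l mod N), m parties with local dimension d^L, where party k's local index
a < d^L encodes by its base-d digit a div d^l mod d the k-th qudit of copy l.\<close>

definition seq_eta :: "nat \<Rightarrow> nat \<Rightarrow> (nat \<Rightarrow> nat \<Rightarrow> real) \<Rightarrow> nat \<Rightarrow> real" where
  "seq_eta N L eta c = (\<Prod>l<L. eta l (c div N ^ l mod N))"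

definition seq_rho ::
  "nat \<Rightarrow> nat \<Rightarrow> nat \<Rightarrow> nat \<Rightarrow> (nat \<Rightarrow> nat \<Rightarrow> op) \<Rightarrow> nat \<Rightarrow> op" where
  "seq_rho m d N L rho c i j =
     (if valid (replicate m (d ^ L)) i \<and> valid (replicate m (d ^ L)) j then
        (\<Prod>l<L. rho l (c div N ^ l mod N) (map (\<lambda>a. a div d ^ l mod d) i)
                                          (map (\<lambda>a. a div d ^ l mod d) j))
      else 0)"

definition density :: "nat \<Rightarrow> (nat \<Rightarrow> nat \<Rightarrow> complex) \<Rightarrow> bool" where
  "density n A \<longleftrightarrow>
     (\<forall>a b. (n \<le> a \<or> n \<le> b) \<longrightarrow> A a b = 0) \<and>
     (\<forall>v :: nat \<Rightarrow> complex. Im (\<Sum>a<n. \<Sum>b<n. cnj (v a) * A a b * v b) = 0 \<and>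
                            Re (\<Sum>a<n. \<Sum>b<n. cnj (v a) * A a b * v b) \<ge> 0) \<and>
     (\<Sum>a<n. A a a) = 1"

definition prodop :: "nat list \<Rightarrow> (nat \<Rightarrow> nat \<Rightarrow> nat \<Rightarrow> complex) \<Rightarrow> op" where
  "prodop ns rhos i j =
     (if valid ns i \<and> valid ns j then (\<Prod>k<length ns. rhos k (i ! k) (j ! k)) else 0)"

definition separable :: "nat list \<Rightarrow> op \<Rightarrow> bool" where
  "separable ns \<sigma> \<longleftrightarrow>
     (\<exists>(T::nat) (p :: nat \<Rightarrow> real) (rhos :: nat \<Rightarrow> nat \<Rightarrow> nat \<Rightarrow> nat \<Rightarrow> complex).
        (\<forall>t<T. p t \<ge> 0) \<and> (\<Sum>t<T. p t) = 1 \<and>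
        (\<forall>t<T. \<forall>k<length ns. density (ns ! k) (rhos t k)) \<and>
        \<sigma> = (\<lambda>i j. \<Sum>t<T. of_real (p t) * prodop ns (rhos t) i j))"

definition block_positive :: "nat list \<Rightarrow> op \<Rightarrow> bool" where
  "block_positive ns E \<longleftrightarrow> (\<forall>\<sigma>. separable ns \<sigma> \<longrightarrow> Re (tr ns E \<sigma>) \<ge> 0)"

definition Id_md :: "nat \<Rightarrow> nat \<Rightarrow> op" where
  "Id_md m d = idop (replicate m d)"

definition GHZ :: "nat \<Rightarrow> nat \<Rightarrow> op" where
  "GHZ m d i j =
     (if valid (replicate m d) i \<and> valid (replicate m d) j \<and>
         (\<forall>k<m. i ! k = i ! 0) \<and> (\<forall>k<m. j ! k = j ! 0)
      then 1 / of_nat d else 0)"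

text \<open>The ensemble: outcome 0 is (eta_1, rho_1), outcome 1 is (eta_2, rho_2).\<close>

definition ens_eta :: "nat \<Rightarrow> nat \<Rightarrow> nat \<Rightarrow> real" where
  "ens_eta m d j =
     (if j = 0 then 2 * real d ^ m / (real d + 3 * real d ^ m)
      else if j = 1 then (real d + real d ^ m) / (real d + 3 * real d ^ m) else 0)"

definition ens_rho :: "nat \<Rightarrow> nat \<Rightarrow> nat \<Rightarrow> op" where
  "ens_rho m d j =
     (if j = 0 then (\<lambda>i i'. (1 / (2 * of_nat d ^ m)) *
                            (Id_md m d i i' + of_nat d ^ m * GHZ m d i i'))
      else if j = 1 then GHZ m d else zeroop)"

text \<open>(1 - d Phi) \<otimes> (1 + d^m Phi) on two copies, party k holding qudit k of both copies.\<close>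

definition witness_op :: "nat \<Rightarrow> nat \<Rightarrow> op" where
  "witness_op m d i j =
     (if valid (replicate m (d ^ 2)) i \<and> valid (replicate m (d ^ 2)) j then
        (Id_md m d (map (\<lambda>a. a mod d) i) (map (\<lambda>a. a mod d) j)
           - of_nat d * GHZ m d (map (\<lambda>a. a mod d) i) (map (\<lambda>a. a mod d) j)) *
        (Id_md m d (map (\<lambda>a. a div d mod d) i) (map (\<lambda>a. a div d mod d) j)
           + of_nat d ^ m * GHZ m d (map (\<lambda>a. a div d mod d) i) (map (\<lambda>a. a div d mod d) j))
      else 0)"

end

theory Submission
  imports Defs "HOL-Analysis.Convex"
begin

text \<open>Every POVM element of an LOCC protocol, and one minus it, is a finite sum of product
rank-one operators \<open>|u\<^sub>1\<rangle>\<langle>u\<^sub>1| \<otimes> \<dots> \<otimes> |u\<^sub>m\<rangle>\<langle>u\<^sub>m|\<close>.  Against such an operator the identity has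
trace \<open>\<Prod>\<^sub>k \<parallel>u\<^sub>k\<parallel>\<^sup>2\<close> and \<open>d\<Phi>\<close> has trace \<open>|\<Sum>\<^sub>a \<Prod>\<^sub>k u\<^sub>k(a)|\<^sup>2\<close>, which by Cauchy-Schwarz over two of
the \<open>m \<ge> 2\<close> factors is smaller.  So \<open>1 - d\<Phi>\<close> is positive on the LOCC cone, and this caps the
LOCC success probability of one copy of the ensemble at \<open>\<eta>\<^sub>1\<close>, the value of always guessing
\<open>\<rho>\<^sub>1\<close>.

With two or more copies every party holds two qudits, one from each of the first two copies,
and can test them for the maximally entangled state.  Guessing \<open>(\<rho>\<^sub>2, \<rho>\<^sub>1, \<dots>, \<rho>\<^sub>1)\<close> when all
\<open>m\<close> tests succeed and \<open>\<rho>\<^sub>1\<close> everywhere otherwise beats \<open>\<eta>\<^sub>1\<^sup>L\<close>.  The product of the \<open>m\<close> test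
projections is a separable state on which \<open>(1 - d\<Phi>) \<otimes> (1 + d\<^sup>m\<Phi>)\<close> has trace
\<open>2 - d - d\<^sup>1\<^sup>-\<^sup>m < 0\<close>.\<close>

lemma valid_Nil [simp]: "valid [] i \<longleftrightarrow> i = []"
  by (auto simp: valid_def)

lemma valid_Cons_Cons [simp]: "valid (n # ns) (a # i) \<longleftrightarrow> a < n \<and> valid ns i"
  by (auto simp: valid_def nth_Cons split: nat.splits)

lemma valid_Cons_Nil [simp]: "\<not> valid (n # ns) []"
  by (auto simp: valid_def)

lemma valid_list_update:
  "valid ns i \<Longrightarrow> k < length ns \<Longrightarrow> a < n' \<Longrightarrow> valid (ns[k := n']) (i[k := a])"
  by (auto simp: valid_def nth_list_update)

lemma valid_replicate_iff: "valid (replicate m n) i \<longleftrightarrow> length i = m \<and> (\<forall>k<m. i ! k < n)"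
  by (simp add: valid_def)

lemma idx_Cons: "idx (n # ns) = (\<lambda>(a, i). a # i) ` ({..<n} \<times> idx ns)"
proof -
  have "x \<in> (\<lambda>(a, i). a # i) ` ({..<n} \<times> idx ns)" if "valid (n # ns) x" for x
    using that by (cases x) (auto simp: idx_def)
  then show ?thesis by (auto simp: idx_def)
qed

lemma idx_Nil: "idx [] = {[]}"
  by (auto simp: idx_def)

lemma finite_idx [simp]: "finite (idx ns)"
  by (induction ns) (auto simp: idx_Nil idx_Cons)

lemma sum_idx_prod:
  fixes f :: "nat \<Rightarrow> nat \<Rightarrow> 'a::comm_semiring_1"
  shows "(\<Sum>i\<in>idx ns. \<Prod>k<length ns. f k (i ! k)) = (\<Prod>k<length ns. \<Sum>a<ns ! k. f k a)"
proof (induction ns arbitrary: f)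
  case Nil
  then show ?case by (simp add: idx_Nil)
next
  case (Cons n ns)
  have inj: "inj_on (\<lambda>(a, i). a # i) ({..<n} \<times> idx ns)" by (auto simp: inj_on_def)
  have split: "(\<Prod>k<Suc (length ns). f k ((a # i) ! k)) = f 0 a * (\<Prod>k<length ns. f (Suc k) (i ! k))"
    for a i by (simp only: prod.lessThan_Suc_shift) simp
  have "(\<Sum>i\<in>idx (n # ns). \<Prod>k<length (n # ns). f k (i ! k))
      = (\<Sum>(a, i)\<in>{..<n} \<times> idx ns. f 0 a * (\<Prod>k<length ns. f (Suc k) (i ! k)))"
    unfolding idx_Cons
    by (subst sum.reindex[OF inj]) (simp add: split case_prod_beta del: prod.lessThan_Suc)
  also have "\<dots> = (\<Sum>a<n. f 0 a) * (\<Sum>i\<in>idx ns. \<Prod>k<length ns. f (Suc k) (i ! k))"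
    by (simp add: sum.cartesian_product[symmetric] sum_product)
  also have "\<dots> = (\<Sum>a<n. f 0 a) * (\<Prod>k<length ns. \<Sum>a<ns ! k. f (Suc k) a)"
    using Cons.IH[of "\<lambda>k. f (Suc k)"] by simp
  also have "\<dots> = (\<Prod>k<length (n # ns). \<Sum>a<(n # ns) ! k. f k a)"
    by (simp only: length_Cons prod.lessThan_Suc_shift) simp
  finally show ?case .
qed

lemma card_idx_replicate: "card (idx (replicate m n)) = n ^ m"
  using sum_idx_prod[where ns = "replicate m n" and f = "\<lambda>_ _. 1::nat"] by simp

definition kdelta :: "nat \<Rightarrow> nat \<Rightarrow> complex" where
  "kdelta x y = (if x = y then 1 else 0)"

lemma idop_eq_prodop_kdelta: "idop ns = prodop ns (\<lambda>_. kdelta)"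
proof (intro ext)
  fix i j
  show "idop ns i j = prodop ns (\<lambda>_. kdelta) i j"
  proof (cases "valid ns i \<and> valid ns j")
    case True
    then have l: "length i = length ns" "length j = length ns" by (auto simp: valid_def)
    have "(\<Prod>k<length ns. kdelta (i ! k) (j ! k)) = (if i = j then 1 else 0)"
    proof (cases "i = j")
      case False
      then obtain k where "k < length ns" "i ! k \<noteq> j ! k" using l nth_equalityI by metis
      then show ?thesis using False by (subst prod_zero) (auto simp: kdelta_def)
    qed (simp add: kdelta_def)
    then show ?thesis using True by (simp add: idop_def prodop_def)
  qed (auto simp: idop_def prodop_def)
qed

lemma prodop_cong:
  assumes "\<And>k x y. k < length ns \<Longrightarrow> x < ns ! k \<Longrightarrow> y < ns ! k \<Longrightarrow> f k x y = g k x y"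
  shows "prodop ns f = prodop ns g"
  using assms by (auto intro!: ext prod.cong simp: prodop_def valid_def)

lemma prod_fun_upd_factor:
  "k < n \<Longrightarrow> (\<Prod>k'<n. (f(k := g)) k' (i ! k') (j ! k'))
     = g (i ! k) (j ! k) * (\<Prod>k'\<in>{..<n} - {k}. f k' (i ! k') (j ! k'))"
  by (subst prod.remove[of _ k]) (auto intro!: prod.cong)

lemma sum_prodop_fun_upd:
  assumes "k < length ns"
  shows "(\<Sum>r\<in>S. prodop ns (f(k := h r)) i j) = prodop ns (f(k := (\<lambda>x y. \<Sum>r\<in>S. h r x y))) i j"
proof (cases "valid ns i \<and> valid ns j")
  case True
  with assms show ?thesis unfolding prodop_def
    by (simp add: prod_fun_upd_factor sum_distrib_right del: fun_upd_apply)
qed (auto simp: prodop_def)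

lemma conj_local_prodop:
  assumes "k < length ns"
  shows "conj_local ns k n' K (prodop (ns[k := n']) f)
       = prodop ns (f(k := (\<lambda>x y. \<Sum>a<n'. \<Sum>b<n'. cnj (K a x) * f k a b * K b y)))"
proof (intro ext)
  fix i j
  show "conj_local ns k n' K (prodop (ns[k := n']) f) i j
      = prodop ns (f(k := (\<lambda>x y. \<Sum>a<n'. \<Sum>b<n'. cnj (K a x) * f k a b * K b y))) i j"
  proof (cases "valid ns i \<and> valid ns j")
    case True
    then have li: "length i = length ns" and lj: "length j = length ns" by (auto simp: valid_def)
    define R where "R = (\<Prod>k'\<in>{..<length ns} - {k}. f k' (i ! k') (j ! k'))"
    have upd: "(\<Prod>k'<length ns. f k' ((i[k := a]) ! k') ((j[k := b]) ! k')) = f k a b * R" for a b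
      using assms li lj by (subst prod.remove[of _ k]) (auto simp: R_def intro!: prod.cong)
    have "conj_local ns k n' K (prodop (ns[k := n']) f) i j
        = (\<Sum>a<n'. \<Sum>b<n'. cnj (K a (i ! k)) * (f k a b * R) * K b (j ! k))"
      unfolding conj_local_def prodop_def using True assms li lj
      by (auto simp: valid_list_update upd intro!: sum.cong)
    also have "\<dots> = (\<Sum>a<n'. \<Sum>b<n'. cnj (K a (i ! k)) * f k a b * K b (j ! k)) * R"
      by (simp only: sum_distrib_right) (intro sum.cong refl, simp add: mult_ac)
    also have "\<dots> = prodop ns (f(k := (\<lambda>x y. \<Sum>a<n'. \<Sum>b<n'. cnj (K a x) * f k a b * K b y))) i j"
      unfolding prodop_def R_def using True assms by (subst prod_fun_upd_factor) auto
    finally show ?thesis .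
  qed (auto simp: conj_local_def prodop_def)
qed

lemma conj_local_add:
  "conj_local ns k n' K (\<lambda>i j. A i j + B i j) i j = conj_local ns k n' K A i j + conj_local ns k n' K B i j"
  unfolding conj_local_def by (simp add: distrib_left distrib_right sum.distrib)

lemma conj_local_diff:
  "conj_local ns k n' K (\<lambda>i j. A i j - B i j) i j = conj_local ns k n' K A i j - conj_local ns k n' K B i j"
  unfolding conj_local_def by (simp add: left_diff_distrib right_diff_distrib sum_subtractf)

lemma conj_local_zero: "conj_local ns k n' K (\<lambda>i j. 0) = (\<lambda>i j. 0)"
  unfolding conj_local_def by (intro ext) simp

lemma conj_local_sum:
  "conj_local ns k n' K (\<lambda>i j. \<Sum>s\<in>S. F s i j) i j = (\<Sum>s\<in>S. conj_local ns k n' K (F s) i j)"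
proof (cases "valid ns i \<and> valid ns j")
  case True
  have swap: "(\<Sum>a<n'. \<Sum>b<n'. \<Sum>s\<in>S. g s a b) = (\<Sum>s\<in>S. \<Sum>a<n'. \<Sum>b<n'. g s a b)"
    for g :: "_ \<Rightarrow> nat \<Rightarrow> nat \<Rightarrow> complex"
    by (subst sum.swap, rule sum.cong[OF refl], rule sum.swap)
  from True show ?thesis unfolding conj_local_def
    by (simp only: sum_distrib_left sum_distrib_right swap) simp
qed (auto simp: conj_local_def)

lemma sum_conj_local_idop:
  assumes k: "k < length ns"
    and complete: "\<forall>x<ns ! k. \<forall>y<ns ! k.
      (\<Sum>r<R. \<Sum>a<n'. cnj (K r a x) * K r a y) = (if x = y then 1 else 0)"
  shows "(\<Sum>r<R. conj_local ns k n' (K r) (idop (ns[k := n'])) i j) = idop ns i j"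
proof -
  have kraus_r: "conj_local ns k n' (K r) (idop (ns[k := n']))
      = prodop ns ((\<lambda>_. kdelta)(k := (\<lambda>x y. \<Sum>a<n'. cnj (K r a x) * K r a y)))" for r
  proof -
    have "conj_local ns k n' (K r) (idop (ns[k := n']))
        = prodop ns ((\<lambda>_. kdelta)(k := (\<lambda>x y. \<Sum>a<n'. \<Sum>b<n'. cnj (K r a x) * kdelta a b * K r b y)))"
      unfolding idop_eq_prodop_kdelta using k by (simp add: conj_local_prodop)
    also have "(\<lambda>x y. \<Sum>a<n'. \<Sum>b<n'. cnj (K r a x) * kdelta a b * K r b y)
        = (\<lambda>x y. \<Sum>a<n'. cnj (K r a x) * K r a y)"
      by (simp add: kdelta_def if_distrib if_distribR cong: if_cong)
    finally show ?thesis .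
  qed
  have "(\<Sum>r<R. conj_local ns k n' (K r) (idop (ns[k := n'])) i j)
      = prodop ns ((\<lambda>_. kdelta)(k := (\<lambda>x y. \<Sum>r<R. \<Sum>a<n'. cnj (K r a x) * K r a y))) i j"
    using sum_prodop_fun_upd[OF k] by (simp add: kraus_r)
  also have "\<dots> = prodop ns (\<lambda>_. kdelta) i j"
  proof (rule arg_cong[where f = "\<lambda>f. f i j"], rule prodop_cong)
    fix k' x y assume "k' < length ns" "x < ns ! k'" "y < ns ! k'"
    with complete show "((\<lambda>_. kdelta)(k := (\<lambda>x y. \<Sum>r<R. \<Sum>a<n'. cnj (K r a x) * K r a y))) k' x y
        = kdelta x y"
      by (cases "k' = k") (simp_all add: kdelta_def)
  qed
  finally show ?thesis by (simp add: idop_eq_prodop_kdelta)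
qed

section \<open>The cone of separable operators\<close>

definition prod_vec :: "nat list \<Rightarrow> (nat \<Rightarrow> nat \<Rightarrow> complex) \<Rightarrow> nat list \<Rightarrow> complex" where
  "prod_vec ns u i = (if valid ns i then (\<Prod>k<length ns. u k (i ! k)) else 0)"

definition rank1_prod :: "nat list \<Rightarrow> (nat \<Rightarrow> nat \<Rightarrow> complex) \<Rightarrow> op" where
  "rank1_prod ns u = prodop ns (\<lambda>k x y. u k x * cnj (u k y))"

lemma rank1_prod_eq: "rank1_prod ns u i j = prod_vec ns u i * cnj (prod_vec ns u j)"
  by (simp add: rank1_prod_def prodop_def prod_vec_def prod.distrib)

inductive sep_cone :: "nat list \<Rightarrow> op \<Rightarrow> bool" for ns where
  zero: "sep_cone ns (\<lambda>i j. 0)"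
| add_rank1: "sep_cone ns X \<Longrightarrow> sep_cone ns (\<lambda>i j. rank1_prod ns u i j + X i j)"

lemma sep_cone_rank1_prod: "sep_cone ns (rank1_prod ns u)"
  using sep_cone.add_rank1[OF sep_cone.zero, of ns u] by simp

lemma sep_cone_add: "sep_cone ns X \<Longrightarrow> sep_cone ns Y \<Longrightarrow> sep_cone ns (\<lambda>i j. X i j + Y i j)"
proof (induction rule: sep_cone.induct)
  case (add_rank1 X u)
  then have "sep_cone ns (\<lambda>i j. rank1_prod ns u i j + (X i j + Y i j))"
    by (intro sep_cone.add_rank1)
  then show ?case by (simp add: add.assoc)
qed simp

lemma sep_cone_sum:
  "(\<And>r. r \<in> S \<Longrightarrow> sep_cone ns (F r)) \<Longrightarrow> sep_cone ns (\<lambda>i j. \<Sum>r\<in>S. F r i j)"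
  by (induction S rule: infinite_finite_induct) (simp_all add: sep_cone.zero sep_cone_add)

lemma sep_cone_idop: "sep_cone ns (idop ns)"
proof -
  define e where "e x = (\<lambda>k a. if a = x ! k then 1 else (0::complex))" for x :: "nat list"
  have eq_iff: "valid ns i \<Longrightarrow> valid ns x \<Longrightarrow> (\<forall>k<length ns. i ! k = x ! k) \<longleftrightarrow> i = x" for i x
    by (auto simp: valid_def intro: nth_equalityI)
  have basis: "rank1_prod ns (e x) i j = (if i = x \<and> j = x then 1 else 0)" if "x \<in> idx ns" for x i j
  proof (cases "valid ns i \<and> valid ns j")
    case True
    have "(\<Prod>k<length ns. e x k (i ! k) * cnj (e x k (j ! k)))
        = (if (\<forall>k<length ns. i ! k = x ! k) \<and> (\<forall>k<length ns. j ! k = x ! k) then 1 else 0)"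
      by (auto simp: e_def prod_zero_iff intro!: prod.neutral)
    with True that eq_iff[of i x] eq_iff[of j x] show ?thesis
      by (simp add: rank1_prod_def prodop_def idx_def)
  qed (use that in \<open>auto simp: rank1_prod_def prodop_def idx_def\<close>)
  have idop_eq: "idop ns = (\<lambda>i j. \<Sum>x\<in>idx ns. rank1_prod ns (e x) i j)"
  proof (intro ext)
    fix i j
    have "(\<Sum>x\<in>idx ns. rank1_prod ns (e x) i j) = (\<Sum>x\<in>idx ns. if x = i then (if j = i then 1 else 0) else 0)"
      by (intro sum.cong refl) (auto simp: basis)
    also have "\<dots> = idop ns i j"
      by (simp add: sum.delta[OF finite_idx]) (auto simp: idop_def idx_def)
    finally show "idop ns i j = (\<Sum>x\<in>idx ns. rank1_prod ns (e x) i j)" by simp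
  qed
  show ?thesis unfolding idop_eq by (rule sep_cone_sum) (rule sep_cone_rank1_prod)
qed

lemma conj_local_rank1_prod:
  assumes "k < length ns"
  shows "conj_local ns k n' K (rank1_prod (ns[k := n']) u)
       = rank1_prod ns (u(k := (\<lambda>x. \<Sum>a<n'. cnj (K a x) * u k a)))"
  unfolding rank1_prod_def conj_local_prodop[OF assms]
  by (intro arg_cong[where f = "prodop ns"] ext)
     (simp add: sum_distrib_left sum_distrib_right mult_ac)

lemma sep_cone_conj_local:
  assumes "sep_cone (ns[k := n']) X" "k < length ns"
  shows "sep_cone ns (conj_local ns k n' K X)"
  using assms(1)
proof (induction rule: sep_cone.induct)
  case zero
  then show ?case by (simp add: conj_local_zero sep_cone.zero)
next
  case (add_rank1 X u)
  have "conj_local ns k n' K (\<lambda>i j. rank1_prod (ns[k := n']) u i j + X i j)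
      = (\<lambda>i j. rank1_prod ns (u(k := (\<lambda>x. \<Sum>a<n'. cnj (K a x) * u k a))) i j
               + conj_local ns k n' K X i j)"
    using assms(2) by (intro ext) (simp add: conj_local_add conj_local_rank1_prod)
  then show ?case using add_rank1 by (simp add: sep_cone.add_rank1)
qed

text \<open>The induction needs the statement for partial sums of outcomes, not just single ones,
since a local step maps the complement \<open>1 - \<Sum>\<^sub>c M\<^sub>c\<close> of each branch to the complement of the
whole protocol.\<close>

lemma locc_povm_sep_cone:
  assumes "locc_povm ns M"
  shows "sep_cone ns (\<lambda>i j. \<Sum>c\<in>S. M c i j)
       \<and> sep_cone ns (\<lambda>i j. idop ns i j - (\<Sum>c\<in>S. M c i j))"
  using assms
proof (induction arbitrary: S rule: locc_povm.induct)
  case (stop ns j0)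
  have "(if c = j0 then idop ns else zeroop) i j = (if c = j0 then idop ns i j else 0)" for c i j
    by (simp add: zeroop_def)
  then have "(\<Sum>c\<in>S. (if c = j0 then idop ns else zeroop) i j)
      = (if finite S \<and> j0 \<in> S then idop ns i j else 0)" for i j
    by (cases "finite S") simp_all
  then show ?case
    by (cases "finite S \<and> j0 \<in> S") (simp_all add: sep_cone_idop sep_cone.zero)
next
  case (step k ns R n' K Mr)
  have swap: "(\<Sum>c\<in>S. \<Sum>r<R. conj_local ns k n' (K r) (Mr r c) i j)
      = (\<Sum>r<R. conj_local ns k n' (K r) (\<lambda>i j. \<Sum>c\<in>S. Mr r c i j) i j)" for i j
    by (subst sum.swap) (simp add: conj_local_sum)
  have compl: "idop ns i j - (\<Sum>r<R. conj_local ns k n' (K r) (\<lambda>i j. \<Sum>c\<in>S. Mr r c i j) i j)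
      = (\<Sum>r<R. conj_local ns k n' (K r)
                 (\<lambda>i j. idop (ns[k := n']) i j - (\<Sum>c\<in>S. Mr r c i j)) i j)" for i j
    using sum_conj_local_idop[OF step(1) step(4), of i j, symmetric]
    by (simp add: conj_local_diff sum_subtractf)
  have "sep_cone ns (\<lambda>i j. \<Sum>r<R. conj_local ns k n' (K r) (\<lambda>i j. \<Sum>c\<in>S. Mr r c i j) i j)"
    by (rule sep_cone_sum, rule sep_cone_conj_local) (use step in auto)
  moreover have "sep_cone ns (\<lambda>i j. \<Sum>r<R. conj_local ns k n' (K r)
                 (\<lambda>i j. idop (ns[k := n']) i j - (\<Sum>c\<in>S. Mr r c i j)) i j)"
    by (rule sep_cone_sum, rule sep_cone_conj_local) (use step in auto)
  ultimately show ?case by (simp add: swap compl)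
qed

lemma sep_cone_diag_entry_bound:
  assumes "sep_cone ns X"
  shows "Im (X i i) = 0 \<and> 0 \<le> Re (X i i) \<and> cmod (X i j) \<le> (Re (X i i) + Re (X j j)) / 2"
  using assms
proof (induction rule: sep_cone.induct)
  case (add_rank1 X u)
  define p where "p = prod_vec ns u i"
  define q where "q = prod_vec ns u j"
  have "rank1_prod ns u i i = of_real (cmod p ^ 2)"
    unfolding rank1_prod_eq p_def by (rule complex_norm_square[symmetric])
  moreover have "rank1_prod ns u j j = of_real (cmod q ^ 2)"
    unfolding rank1_prod_eq q_def by (rule complex_norm_square[symmetric])
  moreover have "cmod (rank1_prod ns u i j) = cmod p * cmod q"
    by (simp add: rank1_prod_eq p_def q_def norm_mult)
  moreover have "cmod p * cmod q \<le> (cmod p ^ 2 + cmod q ^ 2) / 2"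
    using sum_squares_bound[of "cmod p" "cmod q"] by simp
  moreover have "cmod (rank1_prod ns u i j + X i j) \<le> cmod (rank1_prod ns u i j) + cmod (X i j)"
    by (rule norm_triangle_ineq)
  ultimately show ?case using add_rank1 by simp
qed simp

lemma locc_povm_entry_bound:
  assumes "locc_povm ns M" "i \<in> idx ns" "j \<in> idx ns"
  shows "cmod (M c i j) \<le> 1"
proof -
  have M: "sep_cone ns (M c)" and compl: "sep_cone ns (\<lambda>i j. idop ns i j - M c i j)"
    using locc_povm_sep_cone[OF assms(1), of "{c}"] by simp_all
  have "idop ns i i = 1" "idop ns j j = 1" using assms by (auto simp: idop_def idx_def)
  then have "(Re (M c i i) + Re (M c j j)) / 2 \<le> 1"
    using sep_cone_diag_entry_bound[OF compl, of i i] sep_cone_diag_entry_bound[OF compl, of j j]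
    by auto
  moreover have "cmod (M c i j) \<le> (Re (M c i i) + Re (M c j j)) / 2"
    using sep_cone_diag_entry_bound[OF M] by blast
  ultimately show ?thesis by linarith
qed

lemma tr_add_left: "tr ns (\<lambda>i j. A i j + B i j) X = tr ns A X + tr ns B X"
  unfolding tr_def by (simp add: distrib_right sum.distrib)

lemma tr_diff_left: "tr ns (\<lambda>i j. A i j - B i j) X = tr ns A X - tr ns B X"
  unfolding tr_def by (simp add: left_diff_distrib sum_subtractf)

lemma tr_scale_left: "tr ns (\<lambda>i j. c * A i j) X = c * tr ns A X"
  unfolding tr_def by (simp add: sum_distrib_left mult.assoc)

lemma tr_add_right: "tr ns Y (\<lambda>i j. A i j + B i j) = tr ns Y A + tr ns Y B"
  unfolding tr_def by (simp add: distrib_left sum.distrib)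

lemma tr_diff_right: "tr ns Y (\<lambda>i j. A i j - B i j) = tr ns Y A - tr ns Y B"
  unfolding tr_def by (simp add: right_diff_distrib sum_subtractf)

lemma tr_zero_right: "tr ns Y (\<lambda>i j. 0) = 0"
  unfolding tr_def by simp

lemma tr_idop_left: "tr ns (idop ns) X = (\<Sum>i\<in>idx ns. X i i)"
proof -
  have "tr ns (idop ns) X = (\<Sum>i\<in>idx ns. \<Sum>j\<in>idx ns. if j = i then X j i else 0)"
    unfolding tr_def by (intro sum.cong refl) (auto simp: idop_def idx_def)
  then show ?thesis by (simp add: sum.delta[OF finite_idx])
qed

lemma tr_idop_right: "tr ns Y (idop ns) = (\<Sum>i\<in>idx ns. Y i i)"
proof -
  have "tr ns Y (idop ns) = (\<Sum>i\<in>idx ns. \<Sum>j\<in>idx ns. if j = i then Y i j else 0)"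
    unfolding tr_def by (intro sum.cong refl) (auto simp: idop_def idx_def)
  then show ?thesis by (simp add: sum.delta[OF finite_idx])
qed

lemma tr_sym_right: "(\<And>x y. B x y = B y x) \<Longrightarrow> tr ns A B = (\<Sum>x\<in>idx ns. \<Sum>y\<in>idx ns. A x y * B x y)"
  unfolding tr_def by simp

lemma sep_cone_tr_nonneg:
  assumes "\<And>u. 0 \<le> Re (tr ns Y (rank1_prod ns u))" "sep_cone ns X"
  shows "0 \<le> Re (tr ns Y X)"
  using assms(2) by induction (use assms(1) in \<open>simp_all add: tr_add_right tr_zero_right\<close>)

lemma norm_tr_le:
  assumes "\<And>i j. i \<in> idx ns \<Longrightarrow> j \<in> idx ns \<Longrightarrow> cmod (X j i) \<le> 1"
  shows "cmod (tr ns Y X) \<le> (\<Sum>i\<in>idx ns. \<Sum>j\<in>idx ns. cmod (Y i j))"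
proof -
  have "cmod (tr ns Y X) \<le> (\<Sum>i\<in>idx ns. \<Sum>j\<in>idx ns. cmod (Y i j * X j i))"
    unfolding tr_def by (intro order_trans[OF norm_sum] sum_mono norm_sum)
  also have "\<dots> \<le> (\<Sum>i\<in>idx ns. \<Sum>j\<in>idx ns. cmod (Y i j))"
    using assms by (intro sum_mono) (auto simp: norm_mult intro: mult_left_le)
  finally show ?thesis .
qed

lemma locc_value_le_pL:
  assumes "locc_povm ns M"
  shows "Re (\<Sum>j<N. of_real (eta j) * tr ns (rho j) (M j)) \<le> pL ns N eta rho"
proof -
  let ?vals = "{Re (\<Sum>j<N. of_real (eta j) * tr ns (rho j) (M j)) | M. locc_povm ns M}"
  have "Re (\<Sum>j<N. of_real (eta j) * tr ns (rho j) (M' j))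
      \<le> (\<Sum>j<N. \<bar>eta j\<bar> * (\<Sum>i\<in>idx ns. \<Sum>i'\<in>idx ns. cmod (rho j i i')))" if "locc_povm ns M'" for M'
  proof -
    have "Re (\<Sum>j<N. of_real (eta j) * tr ns (rho j) (M' j))
        \<le> (\<Sum>j<N. cmod (of_real (eta j) * tr ns (rho j) (M' j)))"
      by (rule order_trans[OF complex_Re_le_cmod norm_sum])
    also have "\<dots> \<le> (\<Sum>j<N. \<bar>eta j\<bar> * (\<Sum>i\<in>idx ns. \<Sum>i'\<in>idx ns. cmod (rho j i i')))"
      using norm_tr_le[OF locc_povm_entry_bound[OF that]]
      by (intro sum_mono) (simp add: norm_mult mult_left_mono)
    finally show ?thesis .
  qed
  then have "bdd_above ?vals" by (auto simp: bdd_above_def)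
  moreover have "Re (\<Sum>j<N. of_real (eta j) * tr ns (rho j) (M j)) \<in> ?vals" using assms by blast
  ultimately show ?thesis unfolding pL_def by (rule cSup_upper[rotated])
qed

lemma valid_constant_iff:
  assumes "1 \<le> m"
  shows "valid (replicate m d) x \<and> (\<forall>k<m. x ! k = x ! 0) \<longleftrightarrow> x \<in> (\<lambda>a. replicate m a) ` {..<d}"
proof
  assume x: "valid (replicate m d) x \<and> (\<forall>k<m. x ! k = x ! 0)"
  then have len: "length x = m" and const: "\<forall>k<m. x ! k = x ! 0"
    unfolding valid_replicate_iff by blast+
  have "x = replicate m (x ! 0)"
  proof (rule nth_equalityI)
    fix k assume "k < length x"
    with len have km: "k < m" by simp
    with const have "x ! k = x ! 0" by blast
    with km show "x ! k = replicate m (x ! 0) ! k" by simp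
  qed (simp add: len)
  moreover have "x ! 0 < d"
  proof -
    have "\<forall>k<m. x ! k < d" using x unfolding valid_replicate_iff by blast
    then show ?thesis using assms by simp
  qed
  ultimately show "x \<in> (\<lambda>a. replicate m a) ` {..<d}" by blast
next
  assume "x \<in> (\<lambda>a. replicate m a) ` {..<d}"
  then obtain a where "a < d" "x = replicate m a" by blast
  then show "valid (replicate m d) x \<and> (\<forall>k<m. x ! k = x ! 0)"
    using assms by (simp add: valid_replicate_iff)
qed

lemma GHZ_eq_indicator:
  assumes "1 \<le> m"
  shows "GHZ m d i j = (if i \<in> (\<lambda>a. replicate m a) ` {..<d} \<and> j \<in> (\<lambda>a. replicate m a) ` {..<d}
                        then 1 / of_nat d else 0)"
proof -
  have "GHZ m d i j = (if (valid (replicate m d) i \<and> (\<forall>k<m. i ! k = i ! 0))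
                         \<and> (valid (replicate m d) j \<and> (\<forall>k<m. j ! k = j ! 0)) then 1 / of_nat d else 0)"
    by (simp only: GHZ_def conj_ac)
  then show ?thesis by (simp only: valid_constant_iff[OF assms])
qed

lemma sum_if_mem_subset: "A \<subseteq> B \<Longrightarrow> finite B \<Longrightarrow> (\<Sum>x\<in>B. if x \<in> A then f x else 0) = sum f A"
  by (simp add: sum.inter_restrict[symmetric] Int_absorb1)

lemma tr_GHZ_left:
  assumes "1 \<le> m"
  shows "tr (replicate m d) (GHZ m d) X
       = (\<Sum>a<d. \<Sum>b<d. X (replicate m b) (replicate m a)) / of_nat d"
proof -
  let ?D = "(\<lambda>a. replicate m a) ` {..<d}"
  have sub: "?D \<subseteq> idx (replicate m d)" by (auto simp: idx_def valid_replicate_iff)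
  have inj: "inj_on (\<lambda>a. replicate m a) {..<d}" using assms by (auto simp: inj_on_def)
  have entry: "GHZ m d i j * X j i
      = (if i \<in> ?D then (if j \<in> ?D then X j i / of_nat d else 0) else 0)" for i j
    by (simp add: GHZ_eq_indicator[OF assms])
  have "(\<Sum>j\<in>idx (replicate m d). GHZ m d i j * X j i)
      = (if i \<in> ?D then (\<Sum>j\<in>?D. X j i / of_nat d) else 0)" for i
    unfolding entry by (cases "i \<in> ?D") (simp_all add: sum_if_mem_subset[OF sub])
  then have "tr (replicate m d) (GHZ m d) X = (\<Sum>i\<in>?D. \<Sum>j\<in>?D. X j i / of_nat d)"
    unfolding tr_def using sub by (simp add: sum_if_mem_subset)
  also have "\<dots> = (\<Sum>a<d. \<Sum>b<d. X (replicate m b) (replicate m a)) / of_nat d"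
    by (simp add: sum.reindex[OF inj] sum_divide_distrib)
  finally show ?thesis .
qed

lemma GHZ_sym: "GHZ m d x y = GHZ m d y x"
  unfolding GHZ_def by (simp only: conj_ac)

lemma tr_Id_idop: "tr (replicate m d) (Id_md m d) (idop (replicate m d)) = of_nat d ^ m"
proof -
  have "tr (replicate m d) (Id_md m d) (idop (replicate m d)) = (\<Sum>i\<in>idx (replicate m d). 1)"
    by (simp add: Id_md_def tr_idop_right idop_def idx_def)
  then show ?thesis by (simp add: card_idx_replicate)
qed

lemma tr_GHZ_idop:
  assumes "1 \<le> m" "1 \<le> d"
  shows "tr (replicate m d) (GHZ m d) (idop (replicate m d)) = 1"
proof -
  have "idop (replicate m d) (replicate m b) (replicate m a) = (if a = b then 1 else 0)"
    if "a < d" "b < d" for a b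
    using that assms(1) by (auto simp: idop_def valid_replicate_iff dest: arg_cong[where f = "\<lambda>l. l ! 0"])
  then show ?thesis using assms by (simp add: tr_GHZ_left)
qed

lemma tr_GHZ_GHZ:
  assumes "1 \<le> m" "1 \<le> d"
  shows "tr (replicate m d) (GHZ m d) (GHZ m d) = 1"
  using assms by (simp add: tr_GHZ_left GHZ_def valid_replicate_iff)

lemma tr_Id_rank1_prod:
  "tr (replicate m d) (Id_md m d) (rank1_prod (replicate m d) u)
     = of_real (\<Prod>k<m. \<Sum>a<d. (cmod (u k a))\<^sup>2)"
proof -
  have "rank1_prod (replicate m d) u i i = of_real (\<Prod>k<m. (cmod (u k (i ! k)))\<^sup>2)"
    if "i \<in> idx (replicate m d)" for i
    using that unfolding rank1_prod_eq complex_norm_square[symmetric]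
    by (simp add: prod_vec_def idx_def prod_norm[symmetric] prod_power_distrib)
  then have "tr (replicate m d) (Id_md m d) (rank1_prod (replicate m d) u)
      = of_real (\<Sum>i\<in>idx (replicate m d). \<Prod>k<length (replicate m d). (cmod (u k (i ! k)))\<^sup>2)"
    by (simp add: Id_md_def tr_idop_left del: of_real_prod of_real_sum of_real_power)
       (rule of_real_sum[symmetric])
  also have "(\<Sum>i\<in>idx (replicate m d). \<Prod>k<length (replicate m d). (cmod (u k (i ! k)))\<^sup>2)
      = (\<Prod>k<m. \<Sum>a<d. (cmod (u k a))\<^sup>2)"
    using sum_idx_prod[where ns = "replicate m d" and f = "\<lambda>k a. (cmod (u k a))\<^sup>2"] by simp
  finally show ?thesis .
qed

lemma tr_GHZ_rank1_prod:
  assumes "1 \<le> m"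
  shows "tr (replicate m d) (GHZ m d) (rank1_prod (replicate m d) u)
       = of_real ((cmod (\<Sum>a<d. \<Prod>k<m. u k a))\<^sup>2) / of_nat d"
proof -
  define s where "s = (\<Sum>a<d. \<Prod>k<m. u k a)"
  have "(\<Sum>a<d. \<Sum>b<d. rank1_prod (replicate m d) u (replicate m b) (replicate m a))
      = (\<Sum>a<d. \<Sum>b<d. (\<Prod>k<m. u k b) * cnj (\<Prod>k<m. u k a))"
    by (intro sum.cong refl) (simp add: rank1_prod_eq prod_vec_def valid_replicate_iff)
  also have "\<dots> = s * cnj s" by (simp add: s_def sum_distrib_left sum_distrib_right mult_ac)
  also have "\<dots> = of_real ((cmod s)\<^sup>2)" by (rule complex_norm_square[symmetric])
  finally show ?thesis by (simp add: tr_GHZ_left[OF assms] s_def)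
qed

text \<open>Cauchy-Schwarz for the first two factors, the trivial bound
\<open>v\<^sub>k(a) \<le> \<parallel>v\<^sub>k\<parallel>\<close> for the others.\<close>

lemma sum_prod_sq_le_prod_sum_sq:
  fixes v :: "nat \<Rightarrow> nat \<Rightarrow> real"
  assumes "2 \<le> m" "\<And>k a. 0 \<le> v k a"
  shows "(\<Sum>a<d. \<Prod>k<m. v k a)\<^sup>2 \<le> (\<Prod>k<m. \<Sum>a<d. (v k a)\<^sup>2)"
proof -
  define N where "N k = (\<Sum>a<d. (v k a)\<^sup>2)" for k
  define C where "C = (\<Prod>k\<in>{2..<m}. sqrt (N k))"
  have N_nonneg: "0 \<le> N k" for k unfolding N_def by (simp add: sum_nonneg)
  have split: "(\<Prod>k<m. f k) = f 0 * f 1 * (\<Prod>k\<in>{2..<m}. f k)" for f :: "nat \<Rightarrow> real"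
  proof -
    have "{..<m} = {0, 1} \<union> {2..<m}" using assms(1) by auto
    then show ?thesis by (simp add: prod.union_disjoint)
  qed
  have tail_le: "(\<Prod>k\<in>{2..<m}. v k a) \<le> C" if "a < d" for a
  proof -
    have "(v k a)\<^sup>2 \<le> N k" for k unfolding N_def using that by (intro member_le_sum) auto
    then have "v k a \<le> sqrt (N k)" for k using assms(2) real_le_rsqrt by blast
    then show ?thesis unfolding C_def using assms(2) by (intro prod_mono) auto
  qed
  have "0 \<le> (\<Sum>a<d. \<Prod>k<m. v k a)" using assms(2) by (simp add: sum_nonneg prod_nonneg)
  moreover have "(\<Sum>a<d. \<Prod>k<m. v k a) \<le> C * (\<Sum>a<d. v 0 a * v 1 a)"
  proof -
    have "(\<Sum>a<d. \<Prod>k<m. v k a) \<le> (\<Sum>a<d. v 0 a * v 1 a * C)"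
      unfolding split using tail_le assms(2) by (intro sum_mono mult_left_mono) auto
    then show ?thesis by (simp add: sum_distrib_left mult_ac)
  qed
  ultimately have "(\<Sum>a<d. \<Prod>k<m. v k a)\<^sup>2 \<le> C\<^sup>2 * (\<Sum>a<d. v 0 a * v 1 a)\<^sup>2"
    by (metis power_mono power_mult_distrib)
  also have "\<dots> \<le> C\<^sup>2 * (N 0 * N 1)"
    unfolding N_def by (intro mult_left_mono Cauchy_Schwarz_ineq_sum) auto
  also have "\<dots> = (\<Prod>k<m. N k)"
    unfolding split C_def by (simp add: prod_power_distrib N_nonneg)
  finally show ?thesis by (simp add: N_def)
qed

lemma sep_cone_tr_Id_nonneg:
  "sep_cone (replicate m d) X \<Longrightarrow> 0 \<le> Re (tr (replicate m d) (Id_md m d) X)"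
  by (erule sep_cone_tr_nonneg[rotated])
     (simp only: tr_Id_rank1_prod Re_complex_of_real, intro prod_nonneg sum_nonneg, simp)

lemma sep_cone_tr_GHZ_nonneg:
  "1 \<le> m \<Longrightarrow> sep_cone (replicate m d) X \<Longrightarrow> 0 \<le> Re (tr (replicate m d) (GHZ m d) X)"
  by (erule sep_cone_tr_nonneg[rotated]) (simp add: tr_GHZ_rank1_prod)

text \<open>This is the block positivity of \<open>1 - d\<Phi>\<close>; it fails for \<open>m = 1\<close>.\<close>

lemma sep_cone_tr_Id_minus_GHZ_nonneg:
  assumes "2 \<le> m" "sep_cone (replicate m d) X"
  shows "0 \<le> Re (tr (replicate m d) (\<lambda>i j. Id_md m d i j - of_nat d * GHZ m d i j) X)"
  using assms(2)
proof (rule sep_cone_tr_nonneg[rotated])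
  fix u
  have "(cmod (\<Sum>a<d. \<Prod>k<m. u k a))\<^sup>2 \<le> (\<Sum>a<d. \<Prod>k<m. cmod (u k a))\<^sup>2"
    by (intro power_mono) (auto intro!: order_trans[OF norm_sum] simp: prod_norm[symmetric])
  also have "\<dots> \<le> (\<Prod>k<m. \<Sum>a<d. (cmod (u k a))\<^sup>2)"
    using assms(1) by (rule sum_prod_sq_le_prod_sum_sq) simp
  finally show "0 \<le> Re (tr (replicate m d) (\<lambda>i j. Id_md m d i j - of_nat d * GHZ m d i j)
                          (rank1_prod (replicate m d) u))"
    using assms(1)
    by (cases "d = 0") (simp_all add: tr_diff_left tr_scale_left tr_Id_rank1_prod tr_GHZ_rank1_prod
        del: of_real_prod of_real_sum of_real_power)
qed

section \<open>One copy\<close>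

lemma ens_weighted_diff:
  assumes "1 \<le> d"
  shows "of_real (ens_eta m d 0) * ens_rho m d 0 i j - of_real (ens_eta m d 1) * ens_rho m d 1 i j
       = of_real (1 / (real d + 3 * real d ^ m)) * (Id_md m d i j - of_nat d * GHZ m d i j)"
proof -
  define D where "D = real d + 3 * real d ^ m"
  have "0 < D" unfolding D_def using assms by (intro add_pos_nonneg) auto
  moreover have "real d ^ m \<noteq> 0" using assms by simp
  moreover have "ens_eta m d 0 = 2 * real d ^ m / D" "ens_eta m d 1 = (real d + real d ^ m) / D"
    by (simp_all add: ens_eta_def D_def)
  ultimately have coeff_Id: "ens_eta m d 0 / (2 * real d ^ m) = 1 / D"
    and coeff_GHZ: "ens_eta m d 0 / 2 - ens_eta m d 1 = - real d / D"
    by (simp_all add: field_simps less_imp_neq[symmetric])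
  have "of_real (ens_eta m d 0) * ens_rho m d 0 i j - of_real (ens_eta m d 1) * ens_rho m d 1 i j
      = of_real (ens_eta m d 0 / (2 * real d ^ m)) * Id_md m d i j
        + of_real (ens_eta m d 0 / 2 - ens_eta m d 1) * GHZ m d i j"
    using assms by (simp add: ens_rho_def field_simps)
  also have "\<dots> = of_real (1 / D) * (Id_md m d i j - of_nat d * GHZ m d i j)"
    unfolding coeff_Id coeff_GHZ by (simp add: algebra_simps)
  finally show ?thesis by (simp add: D_def)
qed

lemma tr_ens_rho0:
  "tr ns (ens_rho m d 0) X
     = (tr ns (Id_md m d) X + of_nat d ^ m * tr ns (GHZ m d) X) / (2 * of_nat d ^ m)"
  unfolding ens_rho_def by (simp only: simp_thms if_True tr_scale_left tr_add_left) simp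

lemma tr_ens_rho0_idop:
  assumes "1 \<le> m" "1 \<le> d"
  shows "tr (replicate m d) (ens_rho m d 0) (idop (replicate m d)) = 1"
  using assms by (simp add: tr_ens_rho0 tr_Id_idop tr_GHZ_idop)

lemma sep_cone_tr_ens_rho0_nonneg:
  assumes "1 \<le> m" "sep_cone (replicate m d) X"
  shows "0 \<le> Re (tr (replicate m d) (ens_rho m d 0) X)"
  using sep_cone_tr_Id_nonneg[OF assms(2)] sep_cone_tr_GHZ_nonneg[OF assms]
  by (simp add: tr_ens_rho0)

lemma locc_value_one_copy_le:
  assumes "2 \<le> m" "1 \<le> d" and M: "locc_povm (replicate m d) M"
  shows "Re (\<Sum>j<2. of_real (ens_eta m d j) * tr (replicate m d) (ens_rho m d j) (M j))
       \<le> ens_eta m d 0"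
proof -
  let ?ns = "replicate m d" and ?\<eta> = "ens_eta m d" and ?\<rho> = "ens_rho m d"
  define B where "B = (\<lambda>i j. idop ?ns i j - (M 0 i j + M 1 i j))"
  have B: "sep_cone ?ns B" using locc_povm_sep_cone[OF M, of "{0, 1}"] by (simp add: B_def)
  have M1: "sep_cone ?ns (M 1)" using locc_povm_sep_cone[OF M, of "{1}"] by simp
  have M0: "M 0 = (\<lambda>i j. idop ?ns i j - B i j - M 1 i j)" by (simp add: B_def)
  have tr_M0: "tr ?ns (?\<rho> 0) (M 0) = 1 - tr ?ns (?\<rho> 0) B - tr ?ns (?\<rho> 0) (M 1)"
    unfolding M0 using assms(1,2) by (simp only: tr_diff_right tr_ens_rho0_idop)
  have tr_diff: "tr ?ns (\<lambda>i j. of_real (?\<eta> 0) * ?\<rho> 0 i j - of_real (?\<eta> 1) * ?\<rho> 1 i j) (M 1)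
      = of_real (?\<eta> 0) * tr ?ns (?\<rho> 0) (M 1) - of_real (?\<eta> 1) * tr ?ns (?\<rho> 1) (M 1)"
    by (simp only: tr_diff_left tr_scale_left)
  have "(\<Sum>j<2. of_real (?\<eta> j) * tr ?ns (?\<rho> j) (M j))
      = of_real (?\<eta> 0) * (1 - tr ?ns (?\<rho> 0) B)
        - tr ?ns (\<lambda>i j. of_real (?\<eta> 0) * ?\<rho> 0 i j - of_real (?\<eta> 1) * ?\<rho> 1 i j) (M 1)"
    unfolding tr_diff by (simp add: numeral_2_eq_2 tr_M0 algebra_simps)
  also have "\<dots> = of_real (?\<eta> 0) * (1 - tr ?ns (?\<rho> 0) B)
        - of_real (1 / (real d + 3 * real d ^ m))
          * tr ?ns (\<lambda>i j. Id_md m d i j - of_nat d * GHZ m d i j) (M 1)"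
    by (simp only: ens_weighted_diff[OF assms(2)] tr_scale_left)
  finally have value_eq: "(\<Sum>j<2. of_real (?\<eta> j) * tr ?ns (?\<rho> j) (M j)) = \<dots>" .
  have "Re (\<Sum>j<2. of_real (?\<eta> j) * tr ?ns (?\<rho> j) (M j))
      = ?\<eta> 0 - ?\<eta> 0 * Re (tr ?ns (?\<rho> 0) B)
        - Re (tr ?ns (\<lambda>i j. Id_md m d i j - of_nat d * GHZ m d i j) (M 1)) / (real d + 3 * real d ^ m)"
    unfolding value_eq by (simp add: algebra_simps)
  moreover have "0 \<le> ?\<eta> 0 * Re (tr ?ns (?\<rho> 0) B)"
    using sep_cone_tr_ens_rho0_nonneg[OF _ B] assms(1) by (simp add: ens_eta_def)
  moreover have "0 \<le> Re (tr ?ns (\<lambda>i j. Id_md m d i j - of_nat d * GHZ m d i j) (M 1))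
                    / (real d + 3 * real d ^ m)"
    using sep_cone_tr_Id_minus_GHZ_nonneg[OF assms(1) M1] by simp
  ultimately show ?thesis by linarith
qed

lemma pL_one_copy:
  assumes "2 \<le> m" "1 \<le> d"
  shows "pL (replicate m d) 2 (ens_eta m d) (ens_rho m d) = ens_eta m d 0"
  unfolding pL_def
proof (rule cSup_eq_maximum)
  let ?ns = "replicate m d"
  let ?guess_rho1 = "\<lambda>j. if j = 0 then idop ?ns else zeroop"
  have guess_value: "ens_eta m d 0 = Re (\<Sum>j<2. of_real (ens_eta m d j) * tr ?ns (ens_rho m d j) (?guess_rho1 j))"
    using assms tr_zero_right[of ?ns]
    by (simp add: numeral_2_eq_2 tr_ens_rho0_idop zeroop_def[abs_def])
  have guess_locc: "locc_povm ?ns ?guess_rho1" by (rule locc_povm.stop)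
  show "ens_eta m d 0 \<in> {Re (\<Sum>j<2. of_real (ens_eta m d j) * tr ?ns (ens_rho m d j) (M j))
                                       | M. locc_povm ?ns M}"
    by (rule CollectI, rule exI[where x = ?guess_rho1], intro conjI guess_value guess_locc)
qed (use locc_value_one_copy_le[OF assms] in blast)

section \<open>Testing two qudits for the maximally entangled state\<close>

text \<open>A local index \<open>a < d\<^sup>2\<close> stands for the two qudits \<open>a mod d\<close> and \<open>a div d\<close>, as in
witness_op and seq_rho; \<open>b + d b\<close> is the pair \<open>(b, b)\<close>.\<close>

definition pair_diag :: "nat \<Rightarrow> nat \<Rightarrow> complex" where
  "pair_diag d a = (if a < d\<^sup>2 \<and> a mod d = a div d then 1 else 0)"

definition max_ent_proj :: "nat \<Rightarrow> nat \<Rightarrow> nat \<Rightarrow> complex" where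
  "max_ent_proj d x y = pair_diag d x * pair_diag d y / of_nat d"

definition pair_embed :: "nat \<Rightarrow> nat list \<Rightarrow> nat list" where
  "pair_embed d x = map (\<lambda>a. a + d * a) x"

lemma pair_digits:
  fixes a d :: nat
  assumes "a < d"
  shows "(a + d * a) mod d = a" "(a + d * a) div d = a" "a + d * a < d\<^sup>2"
proof -
  show "(a + d * a) mod d = a" "(a + d * a) div d = a" using assms by simp_all
  have "a + d * a < d + d * a" using assms by simp
  also have "\<dots> = d * (a + 1)" by (simp add: algebra_simps)
  also have "\<dots> \<le> d * d" using assms by (intro mult_left_mono) auto
  finally show "a + d * a < d\<^sup>2" by (simp add: power2_eq_square)
qed

lemma pair_index_eq_iff: "a + d * a = b + d * b \<longleftrightarrow> a = (b::nat)"
proof -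
  have "a + d * a = Suc d * a" "b + d * b = Suc d * b" by simp_all
  then show ?thesis by (metis mult_cancel1 nat.distinct(1))
qed

lemma pair_diag_nonzero_iff:
  assumes "0 < d"
  shows "pair_diag d a \<noteq> 0 \<longleftrightarrow> (\<exists>b<d. a = b + d * b)"
proof
  assume "pair_diag d a \<noteq> 0"
  then have "a < d\<^sup>2" "a mod d = a div d" by (auto simp: pair_diag_def split: if_splits)
  moreover have "a = a div d * d + a mod d" by simp
  ultimately have "a = a mod d + d * (a mod d)" by (simp add: algebra_simps)
  then show "\<exists>b<d. a = b + d * b" using assms by (meson mod_less_divisor)
qed (auto simp: pair_diag_def pair_digits)

lemma sum_pair_diag:
  assumes "0 < d" "d\<^sup>2 \<le> N"
  shows "(\<Sum>a<N. pair_diag d a * f a) = (\<Sum>b<d. f (b + d * b))"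
proof -
  let ?S = "(\<lambda>b. b + d * b) ` {..<d}"
  have S: "?S = {a. pair_diag d a \<noteq> 0}" using pair_diag_nonzero_iff[OF assms(1)] by auto
  have sub: "?S \<subseteq> {..<N}" using pair_digits(3) assms(2) by fastforce
  have inj: "inj_on (\<lambda>b. b + d * b) {..<d}" by (auto simp: inj_on_def pair_index_eq_iff)
  have "(\<Sum>a<N. pair_diag d a * f a) = (\<Sum>a<N. if a \<in> ?S then f a else 0)"
    unfolding S by (intro sum.cong refl) (simp add: pair_diag_def)
  also have "\<dots> = (\<Sum>b<d. f (b + d * b))"
    by (simp add: sum_if_mem_subset[OF sub] sum.reindex[OF inj])
  finally show ?thesis .
qed

lemma sum_pair_diag_sq:
  assumes "0 < d" "d\<^sup>2 \<le> N"
  shows "(\<Sum>a<N. pair_diag d a * pair_diag d a) = of_nat d"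
  using sum_pair_diag[OF assms, of "pair_diag d"] by (simp add: pair_diag_def pair_digits)

lemma max_ent_proj_idem:
  assumes "0 < d" "d\<^sup>2 \<le> N"
  shows "(\<Sum>a<N. max_ent_proj d a x * max_ent_proj d a y) = max_ent_proj d x y"
proof -
  have "max_ent_proj d a x * max_ent_proj d a y
      = pair_diag d a * pair_diag d a * (pair_diag d x * pair_diag d y / (of_nat d)\<^sup>2)" for a
    by (simp add: max_ent_proj_def power2_eq_square)
  then have "(\<Sum>a<N. max_ent_proj d a x * max_ent_proj d a y)
      = (\<Sum>a<N. pair_diag d a * pair_diag d a) * (pair_diag d x * pair_diag d y / (of_nat d)\<^sup>2)"
    by (simp only: sum_distrib_right)
  also have "(\<Sum>a<N. pair_diag d a * pair_diag d a) = of_nat d" by (rule sum_pair_diag_sq[OF assms])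
  finally show ?thesis using assms by (simp add: max_ent_proj_def power2_eq_square)
qed

lemma density_max_ent_proj:
  assumes "0 < d"
  shows "density (d\<^sup>2) (max_ent_proj d)"
  unfolding density_def
proof (intro conjI allI impI)
  fix a b assume "d\<^sup>2 \<le> a \<or> d\<^sup>2 \<le> b"
  then show "max_ent_proj d a b = 0" by (auto simp: max_ent_proj_def pair_diag_def)
next
  fix v :: "nat \<Rightarrow> complex"
  define s where "s = (\<Sum>b<d\<^sup>2. pair_diag d b * v b)"
  have cnj_pair_diag: "cnj (pair_diag d a) = pair_diag d a" for a by (simp add: pair_diag_def)
  have "(\<Sum>a<d\<^sup>2. \<Sum>b<d\<^sup>2. cnj (v a) * max_ent_proj d a b * v b) = cnj s * s / of_nat d"
    by (simp add: s_def max_ent_proj_def sum_distrib_left sum_distrib_right sum_divide_distrib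
        cnj_pair_diag mult_ac)
  also have "\<dots> = of_real ((cmod s)\<^sup>2) / of_nat d"
    by (simp only: complex_norm_square mult.commute)
  also have "\<dots> = of_real ((cmod s)\<^sup>2 / real d)" by simp
  finally have e: "(\<Sum>a<d\<^sup>2. \<Sum>b<d\<^sup>2. cnj (v a) * max_ent_proj d a b * v b) = of_real ((cmod s)\<^sup>2 / real d)" .
  show "Im (\<Sum>a<d\<^sup>2. \<Sum>b<d\<^sup>2. cnj (v a) * max_ent_proj d a b * v b) = 0"
    "0 \<le> Re (\<Sum>a<d\<^sup>2. \<Sum>b<d\<^sup>2. cnj (v a) * max_ent_proj d a b * v b)"
    unfolding e by simp_all
next
  have "(\<Sum>a<d\<^sup>2. max_ent_proj d a a) = (\<Sum>a<d\<^sup>2. pair_diag d a * pair_diag d a) / of_nat d"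
    by (simp add: max_ent_proj_def sum_divide_distrib)
  then show "(\<Sum>a<d\<^sup>2. max_ent_proj d a a) = 1"
    using assms by (simp add: sum_pair_diag_sq)
qed

lemma separable_max_ent_test:
  assumes "0 < d"
  shows "separable (replicate m (d\<^sup>2)) (prodop (replicate m (d\<^sup>2)) (\<lambda>_. max_ent_proj d))"
  unfolding separable_def
proof (intro exI[where x = 1] exI[where x = "\<lambda>_. 1"] exI[where x = "\<lambda>_ _. max_ent_proj d"] conjI)
  show "\<forall>t<1::nat. \<forall>k<length (replicate m (d\<^sup>2)).
      density (replicate m (d\<^sup>2) ! k) ((\<lambda>_ _. max_ent_proj d) t k)"
    using density_max_ent_proj[OF assms] by simp
qed simp_all

lemma valid_pair_embed:
  assumes "d\<^sup>2 \<le> N" "valid (replicate m d) x"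
  shows "valid (replicate m N) (pair_embed d x)"
  using assms pair_digits(3)[of _ d] by (fastforce simp: valid_replicate_iff pair_embed_def)

lemma sum_idx_pair_embed:
  fixes F :: "nat list \<Rightarrow> 'a::comm_monoid_add"
  assumes "d\<^sup>2 \<le> N" "0 < d"
    and off_diag: "\<And>i. valid (replicate m N) i \<Longrightarrow> (\<exists>k<m. pair_diag d (i ! k) = 0) \<Longrightarrow> F i = 0"
  shows "(\<Sum>i\<in>idx (replicate m N). F i) = (\<Sum>x\<in>idx (replicate m d). F (pair_embed d x))"
proof -
  let ?E = "pair_embed d ` idx (replicate m d)"
  have sub: "?E \<subseteq> idx (replicate m N)" using valid_pair_embed[OF assms(1)] by (auto simp: idx_def)
  have inj: "inj_on (pair_embed d) (idx (replicate m d))"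
    by (rule inj_onI) (simp add: pair_embed_def inj_map_eq_map inj_on_def pair_index_eq_iff)
  have "F i = 0" if i: "i \<in> idx (replicate m N) - ?E" for i
  proof (rule off_diag)
    show v: "valid (replicate m N) i" using i by (simp add: idx_def)
    show "\<exists>k<m. pair_diag d (i ! k) = 0"
    proof (rule ccontr)
      assume "\<not> (\<exists>k<m. pair_diag d (i ! k) = 0)"
      then have "\<forall>k<m. \<exists>b<d. i ! k = b + d * b"
        using pair_diag_nonzero_iff[OF assms(2)] by blast
      then obtain x where x: "\<forall>k<m. x k < d \<and> i ! k = x k + d * x k" by metis
      have "i = pair_embed d (map x [0..<m])"
        using v x by (auto simp: pair_embed_def valid_replicate_iff intro!: nth_equalityI)
      moreover have "map x [0..<m] \<in> idx (replicate m d)"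
        using x by (simp add: idx_def valid_replicate_iff)
      ultimately show False using i by blast
    qed
  qed
  then have "(\<Sum>i\<in>idx (replicate m N). F i) = (\<Sum>i\<in>?E. F i)"
    by (intro sum.mono_neutral_right[OF finite_idx sub]) blast
  also have "\<dots> = (\<Sum>x\<in>idx (replicate m d). F (pair_embed d x))"
    by (simp add: sum.reindex[OF inj])
  finally show ?thesis .
qed

lemma tr_max_ent_test:
  assumes "d\<^sup>2 \<le> N" "0 < d"
  shows "tr (replicate m N) Y (prodop (replicate m N) (\<lambda>_. max_ent_proj d))
       = (\<Sum>x\<in>idx (replicate m d). \<Sum>y\<in>idx (replicate m d). Y (pair_embed d x) (pair_embed d y))
         / of_nat d ^ m"
proof -
  let ?P = "prodop (replicate m N) (\<lambda>_. max_ent_proj d)"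
  have off_diag: "?P j i = 0" "?P i j = 0" if "k < m" "pair_diag d (i ! k) = 0" for i j k
    using that by (auto simp: prodop_def max_ent_proj_def intro!: prod_zero bexI[of _ k])
  have on_diag: "?P (pair_embed d y) (pair_embed d x) = 1 / of_nat d ^ m"
    if "x \<in> idx (replicate m d)" "y \<in> idx (replicate m d)" for x y
  proof -
    have "max_ent_proj d (pair_embed d y ! k) (pair_embed d x ! k) = 1 / of_nat d" if "k < m" for k
      using \<open>k < m\<close> \<open>x \<in> _\<close> \<open>y \<in> _\<close>
      by (simp add: idx_def valid_replicate_iff pair_embed_def max_ent_proj_def pair_diag_def pair_digits)
    with that show ?thesis using valid_pair_embed[OF assms(1)]
      by (simp add: prodop_def idx_def power_one_over)
  qed
  have "tr (replicate m N) Y ?P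
      = (\<Sum>x\<in>idx (replicate m d). \<Sum>y\<in>idx (replicate m d). Y (pair_embed d x) (pair_embed d y)
                                                            * ?P (pair_embed d y) (pair_embed d x))"
    unfolding tr_def
    by (subst sum_idx_pair_embed[OF assms], use off_diag in auto)
       (intro sum.cong refl sum_idx_pair_embed[OF assms], use off_diag in auto)
  also have "\<dots> = (\<Sum>x\<in>idx (replicate m d). \<Sum>y\<in>idx (replicate m d).
                     Y (pair_embed d x) (pair_embed d y)) / of_nat d ^ m"
    by (simp add: on_diag sum_divide_distrib)
  finally show ?thesis .
qed

lemma pair_embed_digit:
  assumes "x \<in> idx (replicate m d)"
  shows "map (\<lambda>a. a div d ^ l mod d) (pair_embed d x) = (if l < 2 then x else replicate m 0)"
proof -
  have "(x ! k + d * x ! k) div d ^ l mod d = (if l < 2 then x ! k else 0)" if "k < m" for k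
  proof -
    have a: "x ! k < d" using assms that by (simp add: idx_def valid_replicate_iff)
    consider "l = 0" | "l = 1" | "2 \<le> l" by linarith
    then show ?thesis
    proof cases
      case 3
      have "x ! k + d * x ! k < d\<^sup>2" by (rule pair_digits(3)[OF a])
      also have "d\<^sup>2 \<le> d ^ l" using 3 a by (intro power_increasing) auto
      finally show ?thesis using 3 by simp
    qed (use pair_digits[OF a] a in simp_all)
  qed
  then show ?thesis using assms
    by (auto intro!: nth_equalityI simp: pair_embed_def idx_def valid_replicate_iff)
qed

lemma tr_commute: "tr ns A B = tr ns B A"
  unfolding tr_def by (subst sum.swap) (simp add: mult.commute)

lemma tr_scale_right: "tr ns Y (\<lambda>i j. c * A i j) = c * tr ns Y A"
  unfolding tr_def by (simp add: sum_distrib_left mult.left_commute)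

lemma Id_md_sym: "Id_md m d x y = Id_md m d y x"
  by (auto simp: Id_md_def idop_def)

lemma pair_embed_digits:
  assumes "x \<in> idx (replicate m d)"
  shows "map (\<lambda>a. a mod d) (pair_embed d x) = x" "map (\<lambda>a. a div d mod d) (pair_embed d x) = x"
  using pair_embed_digit[OF assms, of 0] pair_embed_digit[OF assms, of 1] by simp_all

lemma tr_witness_max_ent_test:
  assumes "1 \<le> m" "1 \<le> d"
  shows "tr (replicate m (d\<^sup>2)) (witness_op m d) (prodop (replicate m (d\<^sup>2)) (\<lambda>_. max_ent_proj d))
       = (2 * of_nat d ^ m - of_nat d - of_nat d * of_nat d ^ m) / of_nat d ^ m"
proof -
  have d0: "0 < d" using assms(2) by simp
  let ?ns = "replicate m d"
  let ?A = "\<lambda>i j. Id_md m d i j - of_nat d * GHZ m d i j"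
  let ?B = "\<lambda>i j. Id_md m d i j + of_nat d ^ m * GHZ m d i j"
  have "tr (replicate m (d\<^sup>2)) (witness_op m d) (prodop (replicate m (d\<^sup>2)) (\<lambda>_. max_ent_proj d))
      = (\<Sum>x\<in>idx ?ns. \<Sum>y\<in>idx ?ns. ?A x y * ?B x y) / of_nat d ^ m"
    unfolding tr_max_ent_test[OF order.refl d0] using valid_pair_embed[OF order.refl]
    by (intro arg_cong2[where f = "(/)"] sum.cong refl)
       (simp_all add: witness_op_def idx_def pair_embed_digits[unfolded idx_def])
  also have "(\<Sum>x\<in>idx ?ns. \<Sum>y\<in>idx ?ns. ?A x y * ?B x y) = tr ?ns ?A ?B"
    by (rule tr_sym_right[symmetric]) (simp add: Id_md_sym GHZ_sym)
  also have "\<dots> = 2 * of_nat d ^ m - of_nat d - of_nat d * of_nat d ^ m"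
    using assms tr_commute[of ?ns "Id_md m d" "GHZ m d"]
    by (simp add: tr_diff_left tr_add_right tr_scale_left tr_scale_right tr_GHZ_GHZ algebra_simps
        tr_Id_idop[folded Id_md_def] tr_GHZ_idop[folded Id_md_def])
  finally show ?thesis .
qed

lemma witness_not_block_positive:
  assumes "1 \<le> m" "2 \<le> d"
  shows "\<not> block_positive (replicate m (d\<^sup>2)) (witness_op m d)"
proof
  assume "block_positive (replicate m (d\<^sup>2)) (witness_op m d)"
  then have "0 \<le> Re ((2 * of_nat d ^ m - of_nat d - of_nat d * of_nat d ^ m) / of_nat d ^ m)"
    using separable_max_ent_test[of d m] tr_witness_max_ent_test[of m d] assms
    unfolding block_positive_def by auto
  then have "0 \<le> (2 * real d ^ m - real d - real d * real d ^ m) / real d ^ m"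
    by (simp del: of_nat_power add: of_nat_power[symmetric])
  moreover have "(2 * real d ^ m - real d - real d * real d ^ m) / real d ^ m < 0"
  proof -
    have "2 * real d ^ m \<le> real d * real d ^ m" using assms(2) by (intro mult_right_mono) auto
    then have "2 * real d ^ m - real d - real d * real d ^ m < 0" using assms(2) by linarith
    then show ?thesis using assms(2) by (simp add: divide_neg_pos)
  qed
  ultimately show False by linarith
qed

section \<open>The multi-copy protocol\<close>

definition test_kraus :: "nat \<Rightarrow> nat \<Rightarrow> nat \<Rightarrow> nat \<Rightarrow> complex" where
  "test_kraus d r a x = (if r = 0 then max_ent_proj d a x else kdelta a x - max_ent_proj d a x)"

definition guess_povm :: "nat list \<Rightarrow> nat \<Rightarrow> nat \<Rightarrow> op" where
  "guess_povm ns c = (\<lambda>j. if j = c then idop ns else zeroop)"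

text \<open>After \<open>n\<close> rounds the last \<open>n\<close> parties have tested their pair (outcome \<open>r = 0\<close>: passed).
The first failure ends the protocol with guess \<open>0\<close>, i.e. \<open>\<rho>\<^sub>1\<close> on every copy; if all tests
pass the guess is \<open>1\<close>, i.e. \<open>\<rho>\<^sub>2\<close> on the first copy and \<open>\<rho>\<^sub>1\<close> on the others.\<close>

fun test_protocol :: "nat list \<Rightarrow> nat \<Rightarrow> nat \<Rightarrow> nat \<Rightarrow> nat \<Rightarrow> op" where
  "test_protocol ns d m 0 = guess_povm ns 1"
| "test_protocol ns d m (Suc n) = (\<lambda>j i i'. \<Sum>r<2.
     conj_local ns (m - Suc n) (ns ! (m - Suc n)) (test_kraus d r)
       ((if r = 0 then test_protocol ns d m n else guess_povm ns 0) j) i i')"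

definition test_factors :: "nat \<Rightarrow> nat \<Rightarrow> nat \<Rightarrow> nat \<Rightarrow> nat \<Rightarrow> nat \<Rightarrow> complex" where
  "test_factors m d n k = (if k < m - n then kdelta else max_ent_proj d)"

lemma replicate_update_same: "(replicate m x)[k := x] = replicate m x"
  by (metis list_update_beyond list_update_id length_replicate nth_replicate not_less)

lemma cnj_max_ent_proj: "cnj (max_ent_proj d a x) = max_ent_proj d a x"
  by (simp add: max_ent_proj_def pair_diag_def)

lemma max_ent_proj_sym: "max_ent_proj d a x = max_ent_proj d x a"
  by (simp add: max_ent_proj_def mult.commute)

lemma test_kraus_complete:
  assumes "0 < d" "d\<^sup>2 \<le> N" "x < N" "y < N"
  shows "(\<Sum>r<2. \<Sum>a<N. cnj (test_kraus d r a x) * test_kraus d r a y) = (if x = y then 1 else 0)"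
proof -
  have cnj_kdelta: "cnj (kdelta a x) = kdelta a x" for a x
    by (simp add: kdelta_def)
  have "kdelta a x * kdelta a y = (if a = x then kdelta x y else 0)"
    "kdelta a x * max_ent_proj d a y = (if a = x then max_ent_proj d x y else 0)"
    "max_ent_proj d a x * kdelta a y = (if a = y then max_ent_proj d x y else 0)" for a
    by (simp_all add: kdelta_def max_ent_proj_sym)
  then have "(\<Sum>a<N. kdelta a x * kdelta a y) = kdelta x y"
    "(\<Sum>a<N. kdelta a x * max_ent_proj d a y) = max_ent_proj d x y"
    "(\<Sum>a<N. max_ent_proj d a x * kdelta a y) = max_ent_proj d x y"
    using assms(3,4) by (simp_all only: sum.delta finite_lessThan) simp_all
  moreover have "(\<Sum>r<2. \<Sum>a<N. cnj (test_kraus d r a x) * test_kraus d r a y)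
      = (\<Sum>a<N. max_ent_proj d a x * max_ent_proj d a y)
        + ((\<Sum>a<N. kdelta a x * kdelta a y) - (\<Sum>a<N. kdelta a x * max_ent_proj d a y)
           - (\<Sum>a<N. max_ent_proj d a x * kdelta a y) + (\<Sum>a<N. max_ent_proj d a x * max_ent_proj d a y))"
    by (simp add: numeral_2_eq_2 test_kraus_def cnj_max_ent_proj cnj_kdelta algebra_simps sum.distrib
        sum_subtractf)
  ultimately show ?thesis using max_ent_proj_idem[OF assms(1,2)] by (simp add: kdelta_def)
qed

lemma locc_test_protocol:
  assumes "0 < m" "0 < d" "d\<^sup>2 \<le> N"
  shows "locc_povm (replicate m N) (test_protocol (replicate m N) d m n)"
proof (induction n)
  case 0
  show ?case unfolding test_protocol.simps guess_povm_def by (rule locc_povm.stop)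
next
  case (Suc n)
  let ?ns = "replicate m N" and ?k = "m - Suc n"
  have k: "?k < length ?ns" using assms(1) by simp
  have "locc_povm ?ns (\<lambda>j i i'. \<Sum>r<2. conj_local ?ns ?k (?ns ! ?k) (test_kraus d r)
          ((\<lambda>r. if r = 0 then test_protocol ?ns d m n else guess_povm ?ns 0) r j) i i')"
  proof (rule locc_povm.step[OF k])
    show "0 < ?ns ! ?k" using k assms(2,3) by (simp add: less_le_trans[of 0 "d\<^sup>2"])
    show "\<forall>x<?ns ! ?k. \<forall>y<?ns ! ?k. (\<Sum>r<2. \<Sum>a<?ns ! ?k. cnj (test_kraus d r a x) * test_kraus d r a y)
        = (if x = y then 1 else 0)"
      using k test_kraus_complete[OF assms(2,3)] by simp
    show "\<forall>r<2. locc_povm (?ns[?k := ?ns ! ?k])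
        ((\<lambda>r. if r = 0 then test_protocol ?ns d m n else guess_povm ?ns 0) r)"
      using Suc locc_povm.stop[of ?ns 0] by (simp add: guess_povm_def)
  qed simp
  then show ?case by simp
qed

lemma conj_local_test_pass:
  assumes "n < m" "0 < d" "d\<^sup>2 \<le> N"
  shows "conj_local (replicate m N) (m - Suc n) N (test_kraus d 0) (prodop (replicate m N) (test_factors m d n))
       = prodop (replicate m N) (test_factors m d (Suc n))"
proof -
  let ?ns = "replicate m N"
  have k_bounds: "m - Suc n < m" "m - Suc n < m - n" using assms by arith+
  then have factor_k: "test_factors m d n (m - Suc n) = kdelta" by (simp add: test_factors_def)
  have "cnj (test_kraus d 0 a x) * kdelta a b * test_kraus d 0 b y
      = (if b = a then max_ent_proj d a x * max_ent_proj d a y else 0)" for a b x y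
    by (simp add: test_kraus_def kdelta_def cnj_max_ent_proj)
  then have "(\<Sum>a<N. \<Sum>b<N. cnj (test_kraus d 0 a x) * kdelta a b * test_kraus d 0 b y)
      = (\<Sum>a<N. max_ent_proj d a x * max_ent_proj d a y)" for x y
    by simp
  then have "conj_local ?ns (m - Suc n) N (test_kraus d 0) (prodop ?ns (test_factors m d n))
      = prodop ?ns ((test_factors m d n)(m - Suc n := max_ent_proj d))"
    using conj_local_prodop[of "m - Suc n" ?ns N "test_kraus d 0" "test_factors m d n"] assms k_bounds
    by (simp add: factor_k max_ent_proj_idem replicate_update_same)
  also have "(test_factors m d n)(m - Suc n := max_ent_proj d) = test_factors m d (Suc n)"
    by (intro ext) (auto simp: test_factors_def)
  finally show ?thesis .
qed

lemma test_protocol_povm: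
  assumes "0 < m" "0 < d" "d\<^sup>2 \<le> N" "n \<le> m"
  shows "test_protocol (replicate m N) d m n 1 = prodop (replicate m N) (test_factors m d n)
       \<and> test_protocol (replicate m N) d m n 0
           = (\<lambda>i j. idop (replicate m N) i j - prodop (replicate m N) (test_factors m d n) i j)
       \<and> (\<forall>j. j \<noteq> 0 \<longrightarrow> j \<noteq> 1 \<longrightarrow> test_protocol (replicate m N) d m n j = zeroop)"
  using assms(4)
proof (induction n)
  case 0
  have "prodop (replicate m N) (test_factors m d 0) = idop (replicate m N)"
    unfolding idop_eq_prodop_kdelta by (rule prodop_cong) (simp add: test_factors_def)
  then show ?case by (auto simp: guess_povm_def zeroop_def)
next
  case (Suc n)
  let ?ns = "replicate m N" and ?k = "m - Suc n"
  let ?C = "\<lambda>r. conj_local ?ns ?k N (test_kraus d r)"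
  have IH: "test_protocol ?ns d m n 1 = prodop ?ns (test_factors m d n)"
     "test_protocol ?ns d m n 0 = (\<lambda>i j. idop ?ns i j - prodop ?ns (test_factors m d n) i j)"
     "\<And>j. j \<noteq> 0 \<Longrightarrow> j \<noteq> 1 \<Longrightarrow> test_protocol ?ns d m n j = zeroop" using Suc by auto
  have step: "test_protocol ?ns d m (Suc n) j i i'
      = ?C 0 (test_protocol ?ns d m n j) i i' + ?C 1 (guess_povm ?ns 0 j) i i'" for j i i'
    using assms(1) by (simp add: numeral_2_eq_2)
  have zero: "?C r zeroop = zeroop" for r by (simp add: zeroop_def[abs_def] conj_local_zero)
  have pass: "?C 0 (prodop ?ns (test_factors m d n)) = prodop ?ns (test_factors m d (Suc n))"
    using assms Suc.prems by (intro conj_local_test_pass) auto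
  have complete: "?C 0 (idop ?ns) i j + ?C 1 (idop ?ns) i j = idop ?ns i j" for i j
    using sum_conj_local_idop[where k = ?k and ns = ?ns and R = 2 and K = "test_kraus d" and n' = N]
      test_kraus_complete[OF assms(2,3)] assms(1)
    by (simp add: numeral_2_eq_2 replicate_update_same)
  show ?case
  proof (intro conjI allI impI)
    show "test_protocol ?ns d m (Suc n) 1 = prodop ?ns (test_factors m d (Suc n))"
      by (intro ext) (simp only: step IH(1), simp add: guess_povm_def zero pass zeroop_def)
    show "test_protocol ?ns d m (Suc n) 0
        = (\<lambda>i j. idop ?ns i j - prodop ?ns (test_factors m d (Suc n)) i j)"
      using complete pass
      by (intro ext) (simp only: step IH(2), simp add: guess_povm_def conj_local_diff)
  next
    fix j :: nat assume "j \<noteq> 0" "j \<noteq> 1"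
    then show "test_protocol ?ns d m (Suc n) j = zeroop"
      by (intro ext) (simp only: step, simp add: IH(3) guess_povm_def zero zeroop_def)
  qed
qed

lemma bij_betw_idx_digit_split:
  assumes "0 < d"
  shows "bij_betw (\<lambda>i. (map (\<lambda>a. a mod d) i, map (\<lambda>a. a div d) i))
           (idx (replicate m (d ^ Suc L))) (idx (replicate m d) \<times> idx (replicate m (d ^ L)))"
proof (rule bij_betw_byWitness[where f' = "\<lambda>(x, y). map (\<lambda>k. x ! k + d * y ! k) [0..<m]"])
  show "\<forall>i\<in>idx (replicate m (d ^ Suc L)).
      (\<lambda>(x, y). map (\<lambda>k. x ! k + d * y ! k) [0..<m]) (map (\<lambda>a. a mod d) i, map (\<lambda>a. a div d) i) = i"
    by (auto simp: idx_def valid_replicate_iff intro!: nth_equalityI)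
  show "\<forall>p\<in>idx (replicate m d) \<times> idx (replicate m (d ^ L)).
      (\<lambda>i. (map (\<lambda>a. a mod d) i, map (\<lambda>a. a div d) i)) ((\<lambda>(x, y). map (\<lambda>k. x ! k + d * y ! k) [0..<m]) p) = p"
    by (auto simp: idx_def valid_replicate_iff intro!: nth_equalityI)
  have "a div d < d ^ L" if "a < d ^ Suc L" for a
    using that by (simp add: less_mult_imp_div_less mult.commute)
  then show "(\<lambda>i. (map (\<lambda>a. a mod d) i, map (\<lambda>a. a div d) i)) ` idx (replicate m (d ^ Suc L))
      \<subseteq> idx (replicate m d) \<times> idx (replicate m (d ^ L))"
    using assms by (auto simp: idx_def valid_replicate_iff)
  have "x + d * y < d ^ Suc L" if "x < d" "y < d ^ L" for x y
  proof -
    have "x + d * y < d * (y + 1)" using that by simp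
    also have "\<dots> \<le> d * d ^ L" using that by (intro mult_left_mono) auto
    finally show ?thesis by simp
  qed
  then show "(\<lambda>(x, y). map (\<lambda>k. x ! k + d * y ! k) [0..<m])
      ` (idx (replicate m d) \<times> idx (replicate m (d ^ L))) \<subseteq> idx (replicate m (d ^ Suc L))"
    by (auto simp: idx_def valid_replicate_iff)
qed

lemma sum_idx_digits_prod:
  fixes G :: "nat \<Rightarrow> nat list \<Rightarrow> 'a::comm_semiring_1"
  assumes "0 < d"
  shows "(\<Sum>i\<in>idx (replicate m (d ^ L)). \<Prod>l<L. G l (map (\<lambda>a. a div d ^ l mod d) i))
       = (\<Prod>l<L. \<Sum>x\<in>idx (replicate m d). G l x)"
proof (induction L arbitrary: G)
  case 0
  then show ?case by (simp add: card_idx_replicate)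
next
  case (Suc L)
  define g where "g = (\<lambda>(x, y). G 0 x * (\<Prod>l<L. G (Suc l) (map (\<lambda>a. a div d ^ l mod d) y)))"
  have digit_Suc: "map (\<lambda>a. a div d ^ Suc l mod d) i = map (\<lambda>a. a div d ^ l mod d) (map (\<lambda>a. a div d) i)"
    for i l by (simp add: div_mult2_eq)
  have "(\<Prod>l<Suc L. G l (map (\<lambda>a. a div d ^ l mod d) i)) = g (map (\<lambda>a. a mod d) i, map (\<lambda>a. a div d) i)"
    for i unfolding g_def by (simp only: prod.lessThan_Suc_shift digit_Suc) simp
  then have "(\<Sum>i\<in>idx (replicate m (d ^ Suc L)). \<Prod>l<Suc L. G l (map (\<lambda>a. a div d ^ l mod d) i))
      = (\<Sum>p\<in>idx (replicate m d) \<times> idx (replicate m (d ^ L)). g p)"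
    using sum.reindex_bij_betw[OF bij_betw_idx_digit_split[OF assms], of g] by simp
  also have "\<dots> = (\<Sum>x\<in>idx (replicate m d). G 0 x)
      * (\<Sum>y\<in>idx (replicate m (d ^ L)). \<Prod>l<L. G (Suc l) (map (\<lambda>a. a div d ^ l mod d) y))"
    by (simp add: g_def sum_product sum.cartesian_product)
  also have "\<dots> = (\<Prod>l<Suc L. \<Sum>x\<in>idx (replicate m d). G l x)"
    using Suc.IH[of "\<lambda>l. G (Suc l)"] by (simp only: prod.lessThan_Suc_shift)
  finally show ?case .
qed

lemma tr_seq_rho_idop:
  assumes "0 < d"
  shows "tr (replicate m (d ^ L)) (seq_rho m d N L rho c) (idop (replicate m (d ^ L)))
       = (\<Prod>l<L. tr (replicate m d) (rho l (c div N ^ l mod N)) (idop (replicate m d)))"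
  using sum_idx_digits_prod[OF assms, where G = "\<lambda>l x. rho l (c div N ^ l mod N) x x"]
  by (simp add: tr_idop_right seq_rho_def idx_def)

lemma seq_rho_pair_embed:
  assumes "x \<in> idx (replicate m d)" "y \<in> idx (replicate m d)" "d\<^sup>2 \<le> d ^ L"
  shows "seq_rho m d N L rho c (pair_embed d x) (pair_embed d y)
       = (\<Prod>l<L. rho l (c div N ^ l mod N) (if l < 2 then x else replicate m 0)
                                           (if l < 2 then y else replicate m 0))"
  using assms valid_pair_embed[OF assms(3)]
  by (simp add: seq_rho_def pair_embed_digit idx_def)

section \<open>Two or more copies\<close>

lemma ens_rho_sym: "ens_rho m d c x y = ens_rho m d c y x"
  by (simp add: ens_rho_def Id_md_sym GHZ_sym zeroop_def)

lemma tr_GHZ_ens_rho0: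
  assumes "1 \<le> m" "1 \<le> d"
  shows "tr (replicate m d) (GHZ m d) (ens_rho m d 0) = of_real ((1 + real d ^ m) / (2 * real d ^ m))"
proof -
  have "tr (replicate m d) (GHZ m d) (ens_rho m d 0)
      = (tr (replicate m d) (GHZ m d) (Id_md m d) + of_nat d ^ m * tr (replicate m d) (GHZ m d) (GHZ m d))
        / (2 * of_nat d ^ m)"
    by (subst tr_commute) (simp add: tr_ens_rho0 tr_commute[of _ "Id_md m d"])
  then show ?thesis using assms by (simp add: tr_GHZ_idop[folded Id_md_def] tr_GHZ_GHZ)
qed

lemma tr_ens_rho0_ens_rho0:
  assumes "1 \<le> m" "1 \<le> d"
  shows "tr (replicate m d) (ens_rho m d 0) (ens_rho m d 0) = of_real ((3 + real d ^ m) / (4 * real d ^ m))"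
proof -
  have "tr (replicate m d) (Id_md m d) (ens_rho m d 0) = 1"
    using tr_ens_rho0_idop[OF assms] tr_commute[of "replicate m d" "Id_md m d" "ens_rho m d 0"]
    by (simp add: Id_md_def)
  then show ?thesis using assms
    by (simp add: tr_ens_rho0[of _ _ _ "ens_rho m d 0"] tr_GHZ_ens_rho0 field_simps)
qed

lemma ens_rho0_origin:
  assumes "1 \<le> d"
  shows "ens_rho m d 0 (replicate m 0) (replicate m 0) = of_real ((1 + real d ^ m / real d) / (2 * real d ^ m))"
  using assms by (simp add: ens_rho_def Id_md_def idop_def GHZ_def valid_replicate_iff)

lemma div_power_Suc_eq_0:
  fixes c b :: nat
  assumes "c < b"
  shows "c div b ^ Suc l = 0"
proof -
  have "b ^ 1 \<le> b ^ Suc l" using assms by (intro power_increasing) auto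
  with assms show ?thesis by (metis div_less less_le_trans power_one_right)
qed

lemma tr_seq_ens_max_ent_test:
  assumes "2 \<le> L" "1 \<le> m" "1 \<le> d" "c < 2"
  shows "tr (replicate m (d ^ L)) (seq_rho m d 2 L (\<lambda>l. ens_rho m d) c)
            (prodop (replicate m (d ^ L)) (\<lambda>_. max_ent_proj d))
       = ens_rho m d 0 (replicate m 0) (replicate m 0) ^ (L - 2)
         * tr (replicate m d) (ens_rho m d c) (ens_rho m d 0) / of_nat d ^ m"
proof -
  let ?q = "ens_rho m d 0 (replicate m 0) (replicate m 0)"
  obtain L' where L: "L = Suc (Suc L')" using assms(1) by (metis add_2_eq_Suc le_Suc_ex add.commute)
  have dL: "d\<^sup>2 \<le> d ^ L" using assms(1,3) by (intro power_increasing) auto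
  have "seq_rho m d 2 L (\<lambda>l. ens_rho m d) c (pair_embed d x) (pair_embed d y)
      = ?q ^ (L - 2) * (ens_rho m d c x y * ens_rho m d 0 x y)"
    if "x \<in> idx (replicate m d)" "y \<in> idx (replicate m d)" for x y
    using assms(4) div_power_Suc_eq_0[OF assms(4)]
    by (simp only: seq_rho_pair_embed[OF that dL])
       (simp add: L prod.lessThan_Suc_shift del: prod.lessThan_Suc power_Suc)
  then have "tr (replicate m (d ^ L)) (seq_rho m d 2 L (\<lambda>l. ens_rho m d) c)
            (prodop (replicate m (d ^ L)) (\<lambda>_. max_ent_proj d))
      = ?q ^ (L - 2) * (\<Sum>x\<in>idx (replicate m d). \<Sum>y\<in>idx (replicate m d).
                          ens_rho m d c x y * ens_rho m d 0 x y) / of_nat d ^ m"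
    using assms(3) by (simp add: tr_max_ent_test[OF dL] sum_distrib_left)
  then show ?thesis by (simp add: tr_sym_right ens_rho_sym)
qed

lemma seq_eta_two_outcomes:
  assumes "0 < L"
  shows "seq_eta 2 L (\<lambda>l. eta) 0 = eta 0 ^ L" "seq_eta 2 L (\<lambda>l. eta) 1 = eta 1 * eta 0 ^ (L - 1)"
proof -
  obtain L' where L: "L = Suc L'" using assms by (metis gr0_implies_Suc)
  show "seq_eta 2 L (\<lambda>l. eta) 0 = eta 0 ^ L" by (simp add: seq_eta_def)
  have "1 div 2 ^ Suc l = (0::nat)" for l by (rule div_power_Suc_eq_0) simp_all
  then show "seq_eta 2 L (\<lambda>l. eta) 1 = eta 1 * eta 0 ^ (L - 1)"
    unfolding seq_eta_def L by (simp only: prod.lessThan_Suc_shift) simp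
qed

text \<open>When both qudits of every party pass the test, the first copy is more likely to carry
\<open>\<Phi>\<close> than \<open>\<rho>\<^sub>1\<close>.\<close>

lemma ens_eta_gain:
  assumes "2 \<le> d"
  shows "ens_eta m d 0 * ((3 + real d ^ m) / (4 * real d ^ m))
       < ens_eta m d 1 * ((1 + real d ^ m) / (2 * real d ^ m))"
proof -
  define P where "P = real d ^ m"
  define D where "D = real d + 3 * P"
  have P: "0 < P" and D: "0 < D" using assms by (simp_all add: P_def D_def add_pos_pos)
  have eta: "ens_eta m d 0 = 2 * P / D" "ens_eta m d 1 = (real d + P) / D"
    by (simp_all add: ens_eta_def P_def D_def)
  have "2 * (1 + P) \<le> real d * (1 + P)" using assms P by (intro mult_right_mono) auto
  then have "P * (3 + P) < (real d + P) * (1 + P)" by (simp add: algebra_simps)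
  then have "P * (3 + P) / (2 * P * D) < (real d + P) * (1 + P) / (2 * P * D)"
    using P D by (intro divide_strict_right_mono) auto
  moreover have "ens_eta m d 0 * ((3 + P) / (4 * P)) = P * (3 + P) / (2 * P * D)"
    "ens_eta m d 1 * ((1 + P) / (2 * P)) = (real d + P) * (1 + P) / (2 * P * D)"
    unfolding eta using P D by (simp_all add: field_simps)
  ultimately show ?thesis by (simp add: P_def)
qed

lemma sum_two_outcomes:
  fixes f :: "nat \<Rightarrow> 'a::comm_monoid_add"
  assumes "1 \<le> L" "\<And>c. c \<noteq> 0 \<Longrightarrow> c \<noteq> 1 \<Longrightarrow> f c = 0"
  shows "(\<Sum>c<2 ^ L. f c) = f 0 + f 1"
proof -
  have "(2::nat) ^ 1 \<le> 2 ^ L" using assms(1) by (intro power_increasing) auto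
  then have "(\<Sum>c<2 ^ L. f c) = (\<Sum>c\<in>{0, 1}. f c)"
    using assms(2) by (intro sum.mono_neutral_right) auto
  then show ?thesis by simp
qed

lemma test_protocol_outcomes:
  assumes "0 < m" "0 < d" "d\<^sup>2 \<le> N"
  shows "test_protocol (replicate m N) d m m 1 = prodop (replicate m N) (\<lambda>_. max_ent_proj d)"
    "test_protocol (replicate m N) d m m 0
       = (\<lambda>i j. idop (replicate m N) i j - prodop (replicate m N) (\<lambda>_. max_ent_proj d) i j)"
    "\<And>c. c \<noteq> 0 \<Longrightarrow> c \<noteq> 1 \<Longrightarrow> test_protocol (replicate m N) d m m c = zeroop"
proof -
  have "test_factors m d m = (\<lambda>_. max_ent_proj d)" by (intro ext) (simp add: test_factors_def)
  then show "test_protocol (replicate m N) d m m 1 = prodop (replicate m N) (\<lambda>_. max_ent_proj d)"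
    "test_protocol (replicate m N) d m m 0
       = (\<lambda>i j. idop (replicate m N) i j - prodop (replicate m N) (\<lambda>_. max_ent_proj d) i j)"
    "\<And>c. c \<noteq> 0 \<Longrightarrow> c \<noteq> 1 \<Longrightarrow> test_protocol (replicate m N) d m m c = zeroop"
    using test_protocol_povm[OF assms order.refl] by auto
qed

lemma locc_value_test_protocol_gt:
  assumes "2 \<le> m" "2 \<le> d" "2 \<le> L"
  shows "ens_eta m d 0 ^ L
       < Re (\<Sum>c<2 ^ L. of_real (seq_eta 2 L (\<lambda>l. ens_eta m d) c)
            * tr (replicate m (d ^ L)) (seq_rho m d 2 L (\<lambda>l. ens_rho m d) c)
                 (test_protocol (replicate m (d ^ L)) d m m c))"
    (is "_ < Re (\<Sum>c<2 ^ L. ?f c)")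
proof -
  let ?ns = "replicate m (d ^ L)" and ?\<eta> = "ens_eta m d"
  let ?rho = "seq_rho m d 2 L (\<lambda>l. ens_rho m d)" and ?T = "prodop ?ns (\<lambda>_. max_ent_proj d)"
  define P where "P = real d ^ m"
  define K where "K = ((1 + P / real d) / (2 * P)) ^ (L - 2) / P"
  have P: "0 < P" using assms by (simp add: P_def)
  then have K: "0 < K" unfolding K_def by (intro divide_pos_pos zero_less_power add_pos_nonneg) auto
  have "d\<^sup>2 \<le> d ^ L" using assms by (intro power_increasing) auto
  note M = test_protocol_outcomes[of m d "d ^ L"] this assms
  have "tr ?ns (?rho 0) (idop ?ns) = 1"
    using assms by (simp add: tr_seq_rho_idop tr_ens_rho0_idop)
  moreover have "tr ?ns (?rho 0) ?T = of_real (K * ((3 + P) / (4 * P)))"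
    using assms tr_seq_ens_max_ent_test[of L m d 0]
    by (simp add: K_def P_def ens_rho0_origin tr_ens_rho0_ens_rho0)
  moreover have "ens_rho m d 1 = GHZ m d" by (simp add: ens_rho_def)
  then have "tr ?ns (?rho 1) ?T = of_real (K * ((1 + P) / (2 * P)))"
    using assms tr_seq_ens_max_ent_test[of L m d 1]
    by (simp add: K_def P_def ens_rho0_origin tr_GHZ_ens_rho0)
  ultimately have value_eq: "(\<Sum>c<2 ^ L. ?f c) = of_real (?\<eta> 0 ^ L) * (1 - of_real (K * ((3 + P) / (4 * P))))
      + of_real (?\<eta> 1 * ?\<eta> 0 ^ (L - 1)) * of_real (K * ((1 + P) / (2 * P)))"
    using M seq_eta_two_outcomes[of L "ens_eta m d"]
    by (simp add: sum_two_outcomes zeroop_def[abs_def] tr_zero_right tr_diff_right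
        M(1)[unfolded One_nat_def])
  have "?\<eta> 0 ^ L = ?\<eta> 0 * ?\<eta> 0 ^ (L - 1)" using assms(3) by (cases L) simp_all
  then have "Re (\<Sum>c<2 ^ L. ?f c) = ?\<eta> 0 ^ L + ?\<eta> 0 ^ (L - 1) * K
          * (?\<eta> 1 * ((1 + P) / (2 * P)) - ?\<eta> 0 * ((3 + P) / (4 * P)))"
    unfolding value_eq
    by (simp only: Re_complex_of_real of_real_mult of_real_diff of_real_1
        flip: of_real_add of_real_mult of_real_diff) (simp add: algebra_simps)
  moreover have "0 < ?\<eta> 0 ^ (L - 1) * K
      * (?\<eta> 1 * ((1 + P) / (2 * P)) - ?\<eta> 0 * ((3 + P) / (4 * P)))"
  proof -
    have "0 < ?\<eta> 0" using assms(2) by (simp add: ens_eta_def add_pos_pos)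
    moreover have "0 < ?\<eta> 1 * ((1 + P) / (2 * P)) - ?\<eta> 0 * ((3 + P) / (4 * P))"
      using ens_eta_gain[OF assms(2), of m] by (simp add: P_def)
    ultimately show ?thesis using K by simp
  qed
  ultimately show ?thesis by linarith
qed

lemma pL_sequence_gt:
  assumes "2 \<le> m" "2 \<le> d" "2 \<le> L"
  shows "ens_eta m d 0 ^ L
       < pL (replicate m (d ^ L)) (2 ^ L) (seq_eta 2 L (\<lambda>l. ens_eta m d))
            (seq_rho m d 2 L (\<lambda>l. ens_rho m d))"
proof -
  have "d\<^sup>2 \<le> d ^ L" using assms by (intro power_increasing) auto
  then have "locc_povm (replicate m (d ^ L)) (test_protocol (replicate m (d ^ L)) d m m)"
    using assms by (intro locc_test_protocol) auto
  then show ?thesis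
    by (rule order.strict_trans2[OF locc_value_test_protocol_gt[OF assms] locc_value_le_pL])
qed

theorem mainTheorem7:
  fixes m d L :: nat
  assumes "m \<ge> 2" and "d \<ge> 2" and "L \<ge> 2"
  shows "(\<Prod>l<L. pL (replicate m d) 2 (ens_eta m d) (ens_rho m d)) = ens_eta m d 0 ^ L
       \<and> ens_eta m d 0 ^ L <
           pL (replicate m (d ^ L)) (2 ^ L)
              (seq_eta 2 L (\<lambda>l. ens_eta m d)) (seq_rho m d 2 L (\<lambda>l. ens_rho m d))
       \<and> \<not> block_positive (replicate m (d ^ 2)) (witness_op m d)"
  using pL_one_copy[of m d] pL_sequence_gt[OF assms] witness_not_block_positive[of m d] assms
  by simp

end
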